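(* In every psi-calculus: if $\Psi\rhd R\xrightarrow{\underline M N}R'$, $\mathcal F(R)=(\nu\tilde b_R)\Psi_R$, $C$ is a finite set of names, and $\tilde b_R\#R,N,C$, then there exist an assertion $\Psi'$, a name sequence $\tilde b_{R'}$ and an assertion $\Psi_{R'}$ such that $\mathcal F(R')=(\nu\tilde b_{R'})\Psi_{R'}$, $\Psi_R\otimes\Psi'\simeq\Psi_{R'}$, and $\tilde b_{R'}\#C,R'$.
   Context: Names: a countably infinite set $\mathcal N$ of atomic names. A nominal set is a set equipped with name swapping operations $(a\;b)\cdot X$ satisfying the usual axioms; the support $\mathrm n(X)$ of an element is the set of names affected by swappings, assumed finite; $a \# X$ ("$a$ fresh for $X$") means $a\notin \mathrm n(X)$, and $A\#X$ for a set/sequence $A$ means every element of $A$ is fresh for $X$. A function/relation is equivariant if it commutes with all swappings. $\tilde a$ denotes a finite sequence of names (also used as the set of its elements). Psi-calculus: given by three nominal datatypes $\mathbf T$ (terms, ranged over by $M,N,K,L$), $\mathbf C$ (conditions, $\varphi$), $\mathbf A$ (assertions, $\Psi$), equivariant operators $\leftrightarrow:\mathbf T\times\mathbf T\to\mathbf C$ (channel equivalence), $\otimes:\mathbf A\times\mathbf A\to\mathbf A$ (composition), $\mathbf 1\in\mathbf A$ (unit), $\vdash\subseteq\mathbf A\times\mathbf C$ (entailment), and equivariant substitution functions $X[\tilde a:=\tilde T]$ (substituting terms for distinct names) on $\mathbf T,\mathbf C,\mathbf A$ satisfying: (S1) if $\tilde a\subseteq\mathrm n(X)$ and $b\in\mathrm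 n(\tilde T)$ then $b\in\mathrm n(X[\tilde a:=\tilde T])$; (S2) if $\tilde b\# X,\tilde a$ then $X[\tilde a:=\tilde T]=((\tilde b\;\tilde a)\cdot X)[\tilde b:=\tilde T]$. Assertions are equivalent, $\Psi\simeq\Psi'$, if for all $\varphi$: $\Psi\vdash\varphi\iff\Psi'\vdash\varphi$. Required: $\Psi\vdash M\leftrightarrow N\Rightarrow\Psi\vdash N\leftrightarrow M$; $\Psi\vdash M\leftrightarrow N\wedge\Psi\vdash N\leftrightarrow L\Rightarrow\Psi\vdash M\leftrightarrow L$; $\Psi\simeq\Psi'\Rightarrow\Psi\otimes\Psi''\simeq\Psi'\otimes\Psi''$; $\Psi\otimes\mathbf 1\simeq\Psi$; $(\Psi\otimes\Psi')\otimes\Psi''\simeq\Psi\otimes(\Psi'\otimes\Psi'')$; $\Psi\otimes\Psi'\simeq\Psi'\otimes\Psi$. Frames: $(\nu\tilde b)\Psi$ with $\tilde b$ binding into $\Psi$, identified up to alpha-equivalence; $(\nu\tilde b_1)\Psi_1\otimes(\nu\tilde b_2)\Psi_2=(\nu\tilde b_1\tilde b_2)(\Psi_1\otimes\Psi_2)$ with $\tilde b_1\#\tilde b_2,\Psi_2$ and $\tilde b_2\#\tilde b_1,\Psi_1$. Agents: $\mathbf 0$; $\overline M N.P$ (output); $\underline M(\lambda\tilde x)N.P$ (input, $\tilde x\subseteq\mathrm n(N)$ without duplicates, binding in $N$ and $P$); $\mathbf{case}\ \varphi_1:P_1\,[\!]\cdots[\!]\,\varphi_n:P_n$; $(\nu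 a)P$ (binds $a$); $P\mid Q$; $!P$; $(\!|\Psi|\!)$ (assertion). Agents are identified up to alpha-equivalence. In $!P$ and in each branch $P_i$ of a case, every assertion must occur under an input or output prefix. Substitution on agents is defined homomorphically, avoiding capture. Frame of an agent: $\mathcal F(\mathbf 0)=\mathcal F(\text{input})=\mathcal F(\text{output})=\mathcal F(\mathbf{case}\ldots)=\mathcal F(!P)=\mathbf 1$, $\mathcal F((\!|\Psi|\!))=\Psi$, $\mathcal F(P\mid Q)=\mathcal F(P)\otimes\mathcal F(Q)$, $\mathcal F((\nu b)P)=(\nu b)\mathcal F(P)$. Actions: output $\overline M(\nu\tilde a)N$ with $\tilde a\subseteq\mathrm n(N)$, input $\underline M N$, and $\tau$; $\mathrm{bn}(\overline M(\nu\tilde a)N)=\tilde a$, otherwise $\emptyset$; $\mathrm n(\tau)=\emptyset$, else $\mathrm n(M)\cup\mathrm n(N)$. Transitions $\Psi\rhd P\xrightarrow{\alpha}P'$ are the least relation closed under (symmetric versions of Com and Par included): In: $\Psi\vdash M\leftrightarrow K$ implies $\Psi\rhd\underline M(\lambda\tilde y)N.P\xrightarrow{\underline K\,N[\tilde y:=\tilde L]}P[\tilde y:=\tilde L]$ for any $\tilde L$. Out: $\Psi\vdash M\leftrightarrow K$ implies $\Psi\rhd\overline MN.P\xrightarrow{\overline KN}P$. Case: $\Psi\rhd P_i\xrightarrow\alpha P'$ and $\Psi\vdash\varphi_i$ imply $\Psi\rhd\mathbf{case}\ \tilde\varphi:\tilde P\xrightarrow\alpha P'$. Com: with $\mathcal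 F(P)=(\nu\tilde b_P)\Psi_P$, $\mathcal F(Q)=(\nu\tilde b_Q)\Psi_Q$, $\tilde b_P\#\Psi,\tilde b_Q,Q,M,P$, $\tilde b_Q\#\Psi,\tilde b_P,P,K,Q$: if $\Psi_Q\otimes\Psi\rhd P\xrightarrow{\overline M(\nu\tilde a)N}P'$, $\Psi_P\otimes\Psi\rhd Q\xrightarrow{\underline KN}Q'$, $\Psi\otimes\Psi_P\otimes\Psi_Q\vdash M\leftrightarrow K$ and $\tilde a\#Q$, then $\Psi\rhd P\mid Q\xrightarrow\tau(\nu\tilde a)(P'\mid Q')$. Par: with $\mathcal F(Q)=(\nu\tilde b_Q)\Psi_Q$, $\tilde b_Q\#\Psi,P,\alpha$: if $\Psi_Q\otimes\Psi\rhd P\xrightarrow\alpha P'$ and $\mathrm{bn}(\alpha)\#Q$ then $\Psi\rhd P\mid Q\xrightarrow\alpha P'\mid Q$. Scope: $\Psi\rhd P\xrightarrow\alpha P'$, $b\#\alpha,\Psi$ imply $\Psi\rhd(\nu b)P\xrightarrow\alpha(\nu b)P'$. Open: $\Psi\rhd P\xrightarrow{\overline M(\nu\tilde a)N}P'$, $b\#\tilde a,\Psi,M$, $b\in\mathrm n(N)$ imply $\Psi\rhd(\nu b)P\xrightarrow{\overline M(\nu\tilde a\cup\{b\})N}P'$. Rep: $\Psi\rhd P\mid !P\xrightarrow\alpha P'$ implies $\Psi\rhd !P\xrightarrow\alpha P'$. $\mathrm{bn}(\alpha)$ binds into the object and derivative; transitions are identified up to alpha-equivalence. *)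

theory Defs
  imports Main
begin

type_synonym name = nat

definition nswap :: "name \<Rightarrow> name \<Rightarrow> name \<Rightarrow> name" where
  "nswap a b c = (if c = a then b else if c = b then a else c)"

definition supp :: "(name \<Rightarrow> name \<Rightarrow> 'x \<Rightarrow> 'x) \<Rightarrow> 'x \<Rightarrow> name set" where
  "supp sw x = {a. infinite {b. sw a b x \<noteq> x}}"

definition nominal_set :: "(name \<Rightarrow> name \<Rightarrow> 'x \<Rightarrow> 'x) \<Rightarrow> bool" where
  "nominal_set sw \<longleftrightarrow>
     (\<forall>a x. sw a a x = x) \<and>
     (\<forall>a b x. sw a b (sw a b x) = x) \<and>
     (\<forall>a b x. sw a b x = sw b a x) \<and>
     (\<forall>a b c d x. sw a b (sw c d x) = sw (nswap a b c) (nswap a b d) (sw a b x)) \<and>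
     (\<forall>x. finite (supp sw x))"

fun swap_seq :: "(name \<Rightarrow> name \<Rightarrow> 'x \<Rightarrow> 'x) \<Rightarrow> name list \<Rightarrow> name list \<Rightarrow> 'x \<Rightarrow> 'x" where
  "swap_seq sw (b # bs) (a # as) x = sw b a (swap_seq sw bs as x)"
| "swap_seq sw _ _ x = x"

record ('t, 'c, 'a) psi =
  swT :: "name \<Rightarrow> name \<Rightarrow> 't \<Rightarrow> 't"
  swC :: "name \<Rightarrow> name \<Rightarrow> 'c \<Rightarrow> 'c"
  swA :: "name \<Rightarrow> name \<Rightarrow> 'a \<Rightarrow> 'a"
  chaneq :: "'t \<Rightarrow> 't \<Rightarrow> 'c"
  comp :: "'a \<Rightarrow> 'a \<Rightarrow> 'a"
  unitA :: 'a
  ent :: "'a \<Rightarrow> 'c \<Rightarrow> bool"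
  substT :: "'t \<Rightarrow> name list \<Rightarrow> 't list \<Rightarrow> 't"
  substC :: "'c \<Rightarrow> name list \<Rightarrow> 't list \<Rightarrow> 'c"
  substA :: "'a \<Rightarrow> name list \<Rightarrow> 't list \<Rightarrow> 'a"

definition suppTs :: "('t, 'c, 'a, 'z) psi_scheme \<Rightarrow> 't list \<Rightarrow> name set" where
  "suppTs Pc Ts = (\<Union>T\<in>set Ts. supp (swT Pc) T)"

definition aeq :: "('t, 'c, 'a, 'z) psi_scheme \<Rightarrow> 'a \<Rightarrow> 'a \<Rightarrow> bool" where
  "aeq Pc \<Psi> \<Psi>' \<longleftrightarrow> (\<forall>\<phi>. ent Pc \<Psi> \<phi> \<longleftrightarrow> ent Pc \<Psi>' \<phi>)"

text \<open>Requirements on a substitution function on a nominal datatype X (S1, S2, equivariance),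
  for substitutions of terms for sequences of distinct names (of matching length).\<close>
definition subst_ok :: "('t, 'c, 'a, 'z) psi_scheme \<Rightarrow> (name \<Rightarrow> name \<Rightarrow> 'x \<Rightarrow> 'x)
    \<Rightarrow> ('x \<Rightarrow> name list \<Rightarrow> 't list \<Rightarrow> 'x) \<Rightarrow> bool" where
  "subst_ok Pc sw sb \<longleftrightarrow>
     (\<forall>a b X xs Ts. sw a b (sb X xs Ts) = sb (sw a b X) (map (nswap a b) xs) (map (swT Pc a b) Ts)) \<and>
     (\<forall>X xs Ts b. distinct xs \<and> length xs = length Ts \<and> set xs \<subseteq> supp sw X \<and> b \<in> suppTs Pc Ts
         \<longrightarrow> b \<in> supp sw (sb X xs Ts)) \<and>
     (\<forall>X xs Ts bs. distinct xs \<and> length xs = length Ts \<and> distinct bs \<and> length bs = length xs \<and>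
         set bs \<inter> (supp sw X \<union> set xs) = {}
         \<longrightarrow> sb X xs Ts = sb (swap_seq sw bs xs X) bs Ts)"

definition psi_calculus :: "('t, 'c, 'a, 'z) psi_scheme \<Rightarrow> bool" where
  "psi_calculus Pc \<longleftrightarrow>
     nominal_set (swT Pc) \<and> nominal_set (swC Pc) \<and> nominal_set (swA Pc) \<and>
     (\<forall>a b M N. swC Pc a b (chaneq Pc M N) = chaneq Pc (swT Pc a b M) (swT Pc a b N)) \<and>
     (\<forall>a b \<Psi> \<Psi>'. swA Pc a b (comp Pc \<Psi> \<Psi>') = comp Pc (swA Pc a b \<Psi>) (swA Pc a b \<Psi>')) \<and>
     (\<forall>a b. swA Pc a b (unitA Pc) = unitA Pc) \<and>
     (\<forall>a b \<Psi> \<phi>. ent Pc \<Psi> \<phi> \<longleftrightarrow> ent Pc (swA Pc a b \<Psi>) (swC Pc a b \<phi>)) \<and>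
     subst_ok Pc (swT Pc) (substT Pc) \<and> subst_ok Pc (swC Pc) (substC Pc) \<and>
     subst_ok Pc (swA Pc) (substA Pc) \<and>
     (\<forall>\<Psi> M N. ent Pc \<Psi> (chaneq Pc M N) \<longrightarrow> ent Pc \<Psi> (chaneq Pc N M)) \<and>
     (\<forall>\<Psi> M N L. ent Pc \<Psi> (chaneq Pc M N) \<and> ent Pc \<Psi> (chaneq Pc N L) \<longrightarrow> ent Pc \<Psi> (chaneq Pc M L)) \<and>
     (\<forall>\<Psi> \<Psi>' \<Psi>''. aeq Pc \<Psi> \<Psi>' \<longrightarrow> aeq Pc (comp Pc \<Psi> \<Psi>'') (comp Pc \<Psi>' \<Psi>'')) \<and>
     (\<forall>\<Psi>. aeq Pc (comp Pc \<Psi> (unitA Pc)) \<Psi>) \<and>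
     (\<forall>\<Psi> \<Psi>' \<Psi>''. aeq Pc (comp Pc (comp Pc \<Psi> \<Psi>') \<Psi>'') (comp Pc \<Psi> (comp Pc \<Psi>' \<Psi>''))) \<and>
     (\<forall>\<Psi> \<Psi>'. aeq Pc (comp Pc \<Psi> \<Psi>') (comp Pc \<Psi>' \<Psi>))"

section \<open>Agents (raw syntax; identified up to alpha-equivalence below)\<close>

datatype ('t, 'c, 'a) agent =
    PNil
  | POut 't 't "('t, 'c, 'a) agent"
  | PIn 't "name list" 't "('t, 'c, 'a) agent"   \<comment> \<open>\<open>M(\<lambda>xs)N.P\<close>, xs binds in N and P\<close>
  | PCase "('c \<times> ('t, 'c, 'a) agent) list"
  | PRes name "('t, 'c, 'a) agent"                \<comment> \<open>\<open>(\<nu>a)P\<close>, binds a\<close>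
  | PPar "('t, 'c, 'a) agent" "('t, 'c, 'a) agent"
  | PBang "('t, 'c, 'a) agent"
  | PAssert 'a

primrec swap_agent :: "('t, 'c, 'a, 'z) psi_scheme \<Rightarrow> name \<Rightarrow> name \<Rightarrow> ('t, 'c, 'a) agent \<Rightarrow> ('t, 'c, 'a) agent" where
  "swap_agent Pc a b PNil = PNil"
| "swap_agent Pc a b (POut M N P) = POut (swT Pc a b M) (swT Pc a b N) (swap_agent Pc a b P)"
| "swap_agent Pc a b (PIn M xs N P) = PIn (swT Pc a b M) (map (nswap a b) xs) (swT Pc a b N) (swap_agent Pc a b P)"
| "swap_agent Pc a b (PCase cs) = PCase (map (map_prod (swC Pc a b) (swap_agent Pc a b)) cs)"
| "swap_agent Pc a b (PRes x P) = PRes (nswap a b x) (swap_agent Pc a b P)"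
| "swap_agent Pc a b (PPar P Q) = PPar (swap_agent Pc a b P) (swap_agent Pc a b Q)"
| "swap_agent Pc a b (PBang P) = PBang (swap_agent Pc a b P)"
| "swap_agent Pc a b (PAssert \<Psi>) = PAssert (swA Pc a b \<Psi>)"

text \<open>Free names (= support of the alpha-equivalence class)\<close>
primrec fn :: "('t, 'c, 'a, 'z) psi_scheme \<Rightarrow> ('t, 'c, 'a) agent \<Rightarrow> name set" where
  "fn Pc PNil = {}"
| "fn Pc (POut M N P) = supp (swT Pc) M \<union> supp (swT Pc) N \<union> fn Pc P"
| "fn Pc (PIn M xs N P) = supp (swT Pc) M \<union> ((supp (swT Pc) N \<union> fn Pc P) - set xs)"
| "fn Pc (PCase cs) = \<Union> (set (map (\<lambda>p. fst p \<union> snd p) (map (map_prod (supp (swC Pc)) (fn Pc)) cs)))"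
| "fn Pc (PRes x P) = fn Pc P - {x}"
| "fn Pc (PPar P Q) = fn Pc P \<union> fn Pc Q"
| "fn Pc (PBang P) = fn Pc P"
| "fn Pc (PAssert \<Psi>) = supp (swA Pc) \<Psi>"

primrec guarded :: "('t, 'c, 'a) agent \<Rightarrow> bool" where
  "guarded PNil = True"
| "guarded (POut M N P) = True"
| "guarded (PIn M xs N P) = True"
| "guarded (PCase cs) = (\<forall>p\<in>set (map (map_prod id guarded) cs). snd p)"
| "guarded (PRes x P) = guarded P"
| "guarded (PPar P Q) = (guarded P \<and> guarded Q)"
| "guarded (PBang P) = guarded P"
| "guarded (PAssert \<Psi>) = False"

primrec wf_agent :: "('t, 'c, 'a, 'z) psi_scheme \<Rightarrow> ('t, 'c, 'a) agent \<Rightarrow> bool" where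
  "wf_agent Pc PNil = True"
| "wf_agent Pc (POut M N P) = wf_agent Pc P"
| "wf_agent Pc (PIn M xs N P) = (distinct xs \<and> set xs \<subseteq> supp (swT Pc) N \<and> wf_agent Pc P)"
| "wf_agent Pc (PCase cs) = ((\<forall>p\<in>set (map (map_prod id (wf_agent Pc)) cs). snd p) \<and>
                             (\<forall>p\<in>set cs. guarded (snd p)))"
| "wf_agent Pc (PRes x P) = wf_agent Pc P"
| "wf_agent Pc (PPar P Q) = (wf_agent Pc P \<and> wf_agent Pc Q)"
| "wf_agent Pc (PBang P) = (wf_agent Pc P \<and> guarded P)"
| "wf_agent Pc (PAssert \<Psi>) = True"

inductive alpha :: "('t, 'c, 'a, 'z) psi_scheme \<Rightarrow> ('t, 'c, 'a) agent \<Rightarrow> ('t, 'c, 'a) agent \<Rightarrow> bool"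
  for Pc where
  a_refl: "alpha Pc P P"
| a_sym: "alpha Pc P Q \<Longrightarrow> alpha Pc Q P"
| a_trans: "alpha Pc P Q \<Longrightarrow> alpha Pc Q R \<Longrightarrow> alpha Pc P R"
| a_swap: "a \<notin> fn Pc P \<Longrightarrow> b \<notin> fn Pc P \<Longrightarrow> alpha Pc P (swap_agent Pc a b P)"
| a_out: "alpha Pc P Q \<Longrightarrow> alpha Pc (POut M N P) (POut M N Q)"
| a_in: "alpha Pc P Q \<Longrightarrow> alpha Pc (PIn M xs N P) (PIn M xs N Q)"
| a_case: "length cs = length ds \<Longrightarrow>
     \<forall>i<length cs. fst (cs ! i) = fst (ds ! i) \<and> alpha Pc (snd (cs ! i)) (snd (ds ! i)) \<Longrightarrow>
     alpha Pc (PCase cs) (PCase ds)"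
| a_res: "alpha Pc P Q \<Longrightarrow> alpha Pc (PRes x P) (PRes x Q)"
| a_par: "alpha Pc P P' \<Longrightarrow> alpha Pc Q Q' \<Longrightarrow> alpha Pc (PPar P Q) (PPar P' Q')"
| a_bang: "alpha Pc P Q \<Longrightarrow> alpha Pc (PBang P) (PBang Q)"

text \<open>A frame \<open>(\<nu>bs)\<Psi>\<close>, with bs binding into \<Psi>, up to alpha-equivalence.\<close>
type_synonym 'a frame = "name list \<times> 'a"

definition fn_frame :: "('t, 'c, 'a, 'z) psi_scheme \<Rightarrow> 'a frame \<Rightarrow> name set" where
  "fn_frame Pc F = supp (swA Pc) (snd F) - set (fst F)"

definition swap_frame :: "('t, 'c, 'a, 'z) psi_scheme \<Rightarrow> name \<Rightarrow> name \<Rightarrow> 'a frame \<Rightarrow> 'a frame" where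
  "swap_frame Pc a b F = (map (nswap a b) (fst F), swA Pc a b (snd F))"

inductive frame_alpha :: "('t, 'c, 'a, 'z) psi_scheme \<Rightarrow> 'a frame \<Rightarrow> 'a frame \<Rightarrow> bool"
  for Pc where
  fa_refl: "frame_alpha Pc F F"
| fa_sym: "frame_alpha Pc F G \<Longrightarrow> frame_alpha Pc G F"
| fa_trans: "frame_alpha Pc F G \<Longrightarrow> frame_alpha Pc G H \<Longrightarrow> frame_alpha Pc F H"
| fa_swap: "a \<notin> fn_frame Pc F \<Longrightarrow> b \<notin> fn_frame Pc F \<Longrightarrow> frame_alpha Pc F (swap_frame Pc a b F)"

text \<open>\<open>frame_of Pc P F\<close>: F is (a representative of) the frame \<open>\<F>(P)\<close>.\<close>
inductive frame_of :: "('t, 'c, 'a, 'z) psi_scheme \<Rightarrow> ('t, 'c, 'a) agent \<Rightarrow> 'a frame \<Rightarrow> bool"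
  for Pc where
  f_nil: "frame_of Pc PNil ([], unitA Pc)"
| f_out: "frame_of Pc (POut M N P) ([], unitA Pc)"
| f_in: "frame_of Pc (PIn M xs N P) ([], unitA Pc)"
| f_case: "frame_of Pc (PCase cs) ([], unitA Pc)"
| f_bang: "frame_of Pc (PBang P) ([], unitA Pc)"
| f_assert: "frame_of Pc (PAssert \<Psi>) ([], \<Psi>)"
| f_res: "frame_of Pc P (bs, \<Psi>) \<Longrightarrow> frame_of Pc (PRes x P) (x # bs, \<Psi>)"
| f_par: "frame_of Pc P (b1, \<Psi>1) \<Longrightarrow> frame_of Pc Q (b2, \<Psi>2) \<Longrightarrow>
     set b1 \<inter> (set b2 \<union> supp (swA Pc) \<Psi>2) = {} \<Longrightarrow>
     set b2 \<inter> (set b1 \<union> supp (swA Pc) \<Psi>1) = {} \<Longrightarrow>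
     frame_of Pc (PPar P Q) (b1 @ b2, comp Pc \<Psi>1 \<Psi>2)"
| f_alpha: "frame_of Pc P F \<Longrightarrow> frame_alpha Pc F G \<Longrightarrow> frame_of Pc P G"
| f_alpha_agent: "alpha Pc P Q \<Longrightarrow> frame_of Pc Q F \<Longrightarrow> frame_of Pc P F"

section \<open>Capture-avoiding substitution on agents (as a relation, up to alpha)\<close>

inductive agent_subst :: "('t, 'c, 'a, 'z) psi_scheme \<Rightarrow> name list \<Rightarrow> 't list \<Rightarrow>
    ('t, 'c, 'a) agent \<Rightarrow> ('t, 'c, 'a) agent \<Rightarrow> bool"
  for Pc xs Ts where
  s_nil: "agent_subst Pc xs Ts PNil PNil"
| s_out: "agent_subst Pc xs Ts P P' \<Longrightarrow>
     agent_subst Pc xs Ts (POut M N P) (POut (substT Pc M xs Ts) (substT Pc N xs Ts) P')"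
| s_in: "set ys \<inter> (set xs \<union> suppTs Pc Ts) = {} \<Longrightarrow> agent_subst Pc xs Ts P P' \<Longrightarrow>
     agent_subst Pc xs Ts (PIn M ys N P) (PIn (substT Pc M xs Ts) ys (substT Pc N xs Ts) P')"
| s_case: "length cs = length ds \<Longrightarrow>
     \<forall>i<length cs. fst (ds ! i) = substC Pc (fst (cs ! i)) xs Ts \<and>
                   agent_subst Pc xs Ts (snd (cs ! i)) (snd (ds ! i)) \<Longrightarrow>
     agent_subst Pc xs Ts (PCase cs) (PCase ds)"
| s_res: "x \<notin> set xs \<Longrightarrow> x \<notin> suppTs Pc Ts \<Longrightarrow> agent_subst Pc xs Ts P P' \<Longrightarrow>
     agent_subst Pc xs Ts (PRes x P) (PRes x P')"
| s_par: "agent_subst Pc xs Ts P P' \<Longrightarrow> agent_subst Pc xs Ts Q Q' \<Longrightarrow>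
     agent_subst Pc xs Ts (PPar P Q) (PPar P' Q')"
| s_bang: "agent_subst Pc xs Ts P P' \<Longrightarrow> agent_subst Pc xs Ts (PBang P) (PBang P')"
| s_assert: "agent_subst Pc xs Ts (PAssert \<Psi>) (PAssert (substA Pc \<Psi> xs Ts))"
| s_alpha: "alpha Pc P Q \<Longrightarrow> agent_subst Pc xs Ts Q Q' \<Longrightarrow> agent_subst Pc xs Ts P Q'"

datatype 't action =
    AOut 't "name list" 't   \<comment> \<open>\<open>M\<nu>as N\<close>, as bind into N and the derivative\<close>
  | AIn 't 't
  | ATau

primrec names_act :: "('t, 'c, 'a, 'z) psi_scheme \<Rightarrow> 't action \<Rightarrow> name set" where
  "names_act Pc (AOut M as N) = supp (swT Pc) M \<union> supp (swT Pc) N"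
| "names_act Pc (AIn M N) = supp (swT Pc) M \<union> supp (swT Pc) N"
| "names_act Pc ATau = {}"

primrec bn :: "'t action \<Rightarrow> name set" where
  "bn (AOut M as N) = set as"
| "bn (AIn M N) = {}"
| "bn ATau = {}"

primrec swap_act :: "('t, 'c, 'a, 'z) psi_scheme \<Rightarrow> name \<Rightarrow> name \<Rightarrow> 't action \<Rightarrow> 't action" where
  "swap_act Pc a b (AOut M as N) = AOut (swT Pc a b M) (map (nswap a b) as) (swT Pc a b N)"
| "swap_act Pc a b (AIn M N) = AIn (swT Pc a b M) (swT Pc a b N)"
| "swap_act Pc a b ATau = ATau"

text \<open>Residuals (action, derivative); the bound names of the action bind into object and derivative.\<close>
definition fn_res :: "('t, 'c, 'a, 'z) psi_scheme \<Rightarrow> 't action \<times> ('t, 'c, 'a) agent \<Rightarrow> name set" where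
  "fn_res Pc r = (names_act Pc (fst r) \<union> fn Pc (snd r)) - bn (fst r)"

definition swap_res :: "('t, 'c, 'a, 'z) psi_scheme \<Rightarrow> name \<Rightarrow> name \<Rightarrow>
    't action \<times> ('t, 'c, 'a) agent \<Rightarrow> 't action \<times> ('t, 'c, 'a) agent" where
  "swap_res Pc a b r = (swap_act Pc a b (fst r), swap_agent Pc a b (snd r))"

inductive resid_alpha :: "('t, 'c, 'a, 'z) psi_scheme \<Rightarrow> 't action \<times> ('t, 'c, 'a) agent \<Rightarrow>
    't action \<times> ('t, 'c, 'a) agent \<Rightarrow> bool"
  for Pc where
  ra_agent: "alpha Pc P Q \<Longrightarrow> resid_alpha Pc (\<alpha>, P) (\<alpha>, Q)"
| ra_sym: "resid_alpha Pc r s \<Longrightarrow> resid_alpha Pc s r"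
| ra_trans: "resid_alpha Pc r s \<Longrightarrow> resid_alpha Pc s t \<Longrightarrow> resid_alpha Pc r t"
| ra_swap: "a \<notin> fn_res Pc r \<Longrightarrow> b \<notin> fn_res Pc r \<Longrightarrow> resid_alpha Pc r (swap_res Pc a b r)"

text \<open>\<open>psi_trans Pc \<Psi> P \<alpha> P'\<close>: \<open>\<Psi> \<rhd> P \<longrightarrow>\<alpha> P'\<close>.\<close>
inductive psi_trans :: "('t, 'c, 'a, 'z) psi_scheme \<Rightarrow> 'a \<Rightarrow> ('t, 'c, 'a) agent \<Rightarrow> 't action \<Rightarrow>
    ('t, 'c, 'a) agent \<Rightarrow> bool"
  for Pc where
  t_in: "ent Pc \<Psi> (chaneq Pc M K) \<Longrightarrow> length Ls = length ys \<Longrightarrow> agent_subst Pc ys Ls P P' \<Longrightarrow>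
     psi_trans Pc \<Psi> (PIn M ys N P) (AIn K (substT Pc N ys Ls)) P'"
| t_out: "ent Pc \<Psi> (chaneq Pc M K) \<Longrightarrow> psi_trans Pc \<Psi> (POut M N P) (AOut K [] N) P"
| t_case: "i < length cs \<Longrightarrow> psi_trans Pc \<Psi> (snd (cs ! i)) \<alpha> P' \<Longrightarrow> ent Pc \<Psi> (fst (cs ! i)) \<Longrightarrow>
     psi_trans Pc \<Psi> (PCase cs) \<alpha> P'"
| t_com: "frame_of Pc P (bP, \<Psi>P) \<Longrightarrow> frame_of Pc Q (bQ, \<Psi>Q) \<Longrightarrow>
     set bP \<inter> (supp (swA Pc) \<Psi> \<union> set bQ \<union> fn Pc Q \<union> supp (swT Pc) M \<union> fn Pc P) = {} \<Longrightarrow>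
     set bQ \<inter> (supp (swA Pc) \<Psi> \<union> set bP \<union> fn Pc P \<union> supp (swT Pc) K \<union> fn Pc Q) = {} \<Longrightarrow>
     psi_trans Pc (comp Pc \<Psi>Q \<Psi>) P (AOut M as N) P' \<Longrightarrow>
     psi_trans Pc (comp Pc \<Psi>P \<Psi>) Q (AIn K N) Q' \<Longrightarrow>
     ent Pc (comp Pc (comp Pc \<Psi> \<Psi>P) \<Psi>Q) (chaneq Pc M K) \<Longrightarrow>
     set as \<inter> fn Pc Q = {} \<Longrightarrow>
     psi_trans Pc \<Psi> (PPar P Q) ATau (foldr PRes as (PPar P' Q'))"
| t_com2: "frame_of Pc P (bP, \<Psi>P) \<Longrightarrow> frame_of Pc Q (bQ, \<Psi>Q) \<Longrightarrow>
     set bP \<inter> (supp (swA Pc) \<Psi> \<union> set bQ \<union> fn Pc Q \<union> supp (swT Pc) K \<union> fn Pc P) = {} \<Longrightarrow>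
     set bQ \<inter> (supp (swA Pc) \<Psi> \<union> set bP \<union> fn Pc P \<union> supp (swT Pc) M \<union> fn Pc Q) = {} \<Longrightarrow>
     psi_trans Pc (comp Pc \<Psi>Q \<Psi>) P (AIn K N) P' \<Longrightarrow>
     psi_trans Pc (comp Pc \<Psi>P \<Psi>) Q (AOut M as N) Q' \<Longrightarrow>
     ent Pc (comp Pc (comp Pc \<Psi> \<Psi>Q) \<Psi>P) (chaneq Pc M K) \<Longrightarrow>
     set as \<inter> fn Pc P = {} \<Longrightarrow>
     psi_trans Pc \<Psi> (PPar P Q) ATau (foldr PRes as (PPar P' Q'))"
| t_par: "frame_of Pc Q (bQ, \<Psi>Q) \<Longrightarrow>
     set bQ \<inter> (supp (swA Pc) \<Psi> \<union> fn Pc P \<union> names_act Pc \<alpha>) = {} \<Longrightarrow>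
     psi_trans Pc (comp Pc \<Psi>Q \<Psi>) P \<alpha> P' \<Longrightarrow> bn \<alpha> \<inter> fn Pc Q = {} \<Longrightarrow>
     psi_trans Pc \<Psi> (PPar P Q) \<alpha> (PPar P' Q)"
| t_par2: "frame_of Pc P (bP, \<Psi>P) \<Longrightarrow>
     set bP \<inter> (supp (swA Pc) \<Psi> \<union> fn Pc Q \<union> names_act Pc \<alpha>) = {} \<Longrightarrow>
     psi_trans Pc (comp Pc \<Psi>P \<Psi>) Q \<alpha> Q' \<Longrightarrow> bn \<alpha> \<inter> fn Pc P = {} \<Longrightarrow>
     psi_trans Pc \<Psi> (PPar P Q) \<alpha> (PPar P Q')"
| t_scope: "psi_trans Pc \<Psi> P \<alpha> P' \<Longrightarrow> b \<notin> names_act Pc \<alpha> \<Longrightarrow> b \<notin> supp (swA Pc) \<Psi> \<Longrightarrow>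
     psi_trans Pc \<Psi> (PRes b P) \<alpha> (PRes b P')"
| t_open: "psi_trans Pc \<Psi> P (AOut M (xs @ ys) N) P' \<Longrightarrow> b \<notin> set (xs @ ys) \<Longrightarrow>
     b \<notin> supp (swA Pc) \<Psi> \<Longrightarrow> b \<notin> supp (swT Pc) M \<Longrightarrow> b \<in> supp (swT Pc) N \<Longrightarrow>
     psi_trans Pc \<Psi> (PRes b P) (AOut M (xs @ b # ys) N) P'"
| t_rep: "psi_trans Pc \<Psi> (PPar P (PBang P)) \<alpha> P' \<Longrightarrow> psi_trans Pc \<Psi> (PBang P) \<alpha> P'"
| t_alpha: "psi_trans Pc \<Psi> P \<alpha> P' \<Longrightarrow> alpha Pc P Q \<Longrightarrow> resid_alpha Pc (\<alpha>, P') (\<beta>, Q') \<Longrightarrow>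
     psi_trans Pc \<Psi> Q \<beta> Q'"

end

theory Submission
  imports Defs
begin

(* An input transition  \<Psi> \<rhd> R --M N--> R'  is derived by the rules In, Case, Rep,
   Par, Scope and alpha-conversion only (Com and Open produce other actions).  Input prefixes,
   case agents and replications have the unit frame, and a Par or Scope step enlarges the
   frame of the agent by a component that reappears unchanged in the derivative.  So by rule
   induction R is "extensible" to R': for every finite D it has a frame F, with binders avoiding
   D, that "extends to" R' -- for every finite C avoided by the binders of F, some frame of R'
   with binders fresh for C and R' has an assertion equivalent to  snd F \<otimes> \<Psi>'  for some \<Psi>'.
   The theorem, however, concerns an arbitrary given frame (bR, \<Psi>R) of R.  We prove that all
   frames of an agent are equivalent (equal free names, assertions related by a permutation
   fixing them), using frames built without alpha-conversion of the agent, and that extension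
   transfers along this equivalence when all binders involved are fresh; bR is fresh for R'
   because the free names of an input derivative are free in the agent or in the object. *)

lemma nswap_simps[simp]:
  "nswap a b a = b" "nswap a b b = a" "c \<noteq> a \<Longrightarrow> c \<noteq> b \<Longrightarrow> nswap a b c = c"
  by (auto simp: nswap_def)

lemma nswap_invol[simp]: "nswap a b (nswap a b c) = c"
  by (auto simp: nswap_def)

lemma nswap_inj: "inj (nswap a b)"
  by (metis injI nswap_invol)

lemma nswap_eq_iff[simp]: "(nswap a b x = nswap a b y) = (x = y)"
  by (metis nswap_invol)

lemma nswap_comp: "nswap a b (nswap c d x) = nswap (nswap a b c) (nswap a b d) (nswap a b x)"
  by (auto simp: nswap_def)

lemma nswap_in_image: "(x \<in> nswap a b ` A) = (nswap a b x \<in> A)"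
  by (metis image_iff nswap_invol)

lemma nswap_image_fix: "a \<notin> A \<Longrightarrow> b \<notin> A \<Longrightarrow> nswap a b ` A = A"
  by (auto simp: nswap_in_image nswap_def)

lemma map_nswap_fix: "a \<notin> set xs \<Longrightarrow> b \<notin> set xs \<Longrightarrow> map (nswap a b) xs = xs"
  by (induct xs) auto

lemma fresh_name: "finite (A :: name set) \<Longrightarrow> \<exists>c. c \<notin> A"
  by (metis ex_new_if_finite infinite_UNIV_nat)

lemma fresh_list: "finite (A :: name set) \<Longrightarrow> \<exists>bs. length bs = n \<and> distinct bs \<and> set bs \<inter> A = {}"
proof (induct n arbitrary: A)
  case (Suc n)
  obtain c where c: "c \<notin> A" using fresh_name Suc.prems by blast
  obtain bs where "length bs = n" "distinct bs" "set bs \<inter> (insert c A) = {}"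
    using Suc by (meson finite_insert)
  then show ?case using c by (intro exI[of _ "c # bs"]) auto
qed simp

locale nomset =
  fixes sw :: "name \<Rightarrow> name \<Rightarrow> 'x \<Rightarrow> 'x"
  assumes nom: "nominal_set sw"
begin

lemma sw_id[simp]: "sw a a x = x" using nom by (simp add: nominal_set_def)
lemma sw_invol[simp]: "sw a b (sw a b x) = x" using nom by (simp add: nominal_set_def)
lemma sw_sym: "sw a b x = sw b a x" using nom by (simp add: nominal_set_def)
lemma sw_comp: "sw a b (sw c d x) = sw (nswap a b c) (nswap a b d) (sw a b x)"
  using nom by (simp add: nominal_set_def)
lemma fin_supp[simp]: "finite (supp sw x)" using nom by (simp add: nominal_set_def)

lemma sw_eq_iff[simp]: "(sw a b x = sw a b y) = (x = y)"
  by (metis sw_invol)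

text \<open>Swapping two names that are both fresh for x leaves x unchanged.  The proof goes
  through a third name c that is fresh in the sense that both (a c) and (b c) fix x.\<close>

lemma fresh_swap: assumes "a \<notin> supp sw x" "b \<notin> supp sw x" shows "sw a b x = x"
proof (cases "a = b")
  case False
  have "finite ({c. sw a c x \<noteq> x} \<union> {c. sw b c x \<noteq> x} \<union> {a, b})"
    using assms by (simp add: supp_def)
  then obtain c where c: "c \<notin> {c. sw a c x \<noteq> x} \<union> {c. sw b c x \<noteq> x} \<union> {a, b}"
    using fresh_name by meson
  then have ca: "sw a c x = x" and cb: "sw b c x = x" and "c \<noteq> a" "c \<noteq> b" by auto
  have "sw a c (sw b c (sw a c x)) = sw b a (sw a c (sw a c x))"
    using sw_comp[of a c b c] False \<open>c \<noteq> a\<close> \<open>c \<noteq> b\<close> by (simp add: nswap_def)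
  then have "sw b a x = x" using ca cb by simp
  then show ?thesis by (simp add: sw_sym)
qed simp

lemma supp_swap: "supp sw (sw a b x) = nswap a b ` supp sw x"
proof -
  have key: "d \<in> supp sw (sw a b x) \<longleftrightarrow> nswap a b d \<in> supp sw x" for d
  proof -
    define p where "p = nswap a b"
    define S where "S = {c. sw (p d) c x \<noteq> x}"
    have "sw d c (sw a b x) = sw a b (sw (p d) (p c) x)" for c
      using sw_comp[of a b "p d" "p c" x] by (simp add: p_def)
    then have eq: "{c. sw d c (sw a b x) \<noteq> sw a b x} = p -` S" by (auto simp: S_def)
    have "p -` S = p ` S" unfolding p_def by (auto simp: nswap_in_image)
    then have "finite (p -` S) = finite S" by (simp add: p_def finite_image_iff inj_on_def)
    then show ?thesis unfolding supp_def mem_Collect_eq eq S_def p_def by blast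
  qed
  show ?thesis by (auto simp: key nswap_in_image)
qed

lemma supp_swap_iff: "(d \<in> supp sw (sw a b x)) = (nswap a b d \<in> supp sw x)"
  by (simp add: supp_swap nswap_in_image)

lemma supp_le: assumes "finite A" "\<And>c d. c \<notin> A \<Longrightarrow> d \<notin> A \<Longrightarrow> sw c d x = x"
  shows "supp sw x \<subseteq> A"
proof
  fix c assume c: "c \<in> supp sw x"
  show "c \<in> A"
  proof (rule ccontr)
    assume "c \<notin> A"
    then have "{d. sw c d x \<noteq> x} \<subseteq> A" using assms(2) by auto
    then show False using c assms(1) finite_subset by (auto simp: supp_def)
  qed
qed

lemma swap_seq_fresh:
  "z \<notin> supp sw X \<Longrightarrow> z \<notin> set bs \<Longrightarrow> z \<notin> set as \<Longrightarrow> z \<notin> supp sw (swap_seq sw bs as X)"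
proof (induct bs arbitrary: as)
  case (Cons b bs)
  then show ?case by (cases as) (auto simp: supp_swap_iff)
qed simp

lemma swap_seq_out: "x \<in> set as \<Longrightarrow> distinct as \<Longrightarrow> distinct bs \<Longrightarrow> length bs = length as \<Longrightarrow>
   set bs \<inter> (supp sw X \<union> set as) = {} \<Longrightarrow> x \<notin> supp sw (swap_seq sw bs as X)"
proof (induct bs arbitrary: as)
  case (Cons b bs as0)
  then obtain a as where as0: "as0 = a # as" by (cases as0) auto
  show ?case
  proof (cases "x = a")
    case True
    have "b \<notin> supp sw (swap_seq sw bs as X)"
      using Cons.prems as0 by (intro swap_seq_fresh) auto
    then show ?thesis using True as0 by (simp add: supp_swap_iff)
  next
    case False
    then have "x \<notin> supp sw (swap_seq sw bs as X)" using Cons as0 by auto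
    moreover have "x \<noteq> b" using Cons.prems as0 by auto
    ultimately show ?thesis using False as0 by (simp add: supp_swap_iff)
  qed
qed simp

end

locale psi_calc =
  fixes Pc :: "('t, 'c, 'a, 'z) psi_scheme"
  assumes psi: "psi_calculus Pc"
begin

sublocale T: nomset "swT Pc" using psi by (simp add: psi_calculus_def nomset_def)
sublocale C: nomset "swC Pc" using psi by (simp add: psi_calculus_def nomset_def)
sublocale A: nomset "swA Pc" using psi by (simp add: psi_calculus_def nomset_def)

lemma comp_eqvt: "swA Pc a b (comp Pc X Y) = comp Pc (swA Pc a b X) (swA Pc a b Y)"
  using psi by (simp add: psi_calculus_def)
lemma unit_eqvt[simp]: "swA Pc a b (unitA Pc) = unitA Pc"
  using psi by (simp add: psi_calculus_def)
lemma ent_eqvt: "ent Pc X \<phi> = ent Pc (swA Pc a b X) (swC Pc a b \<phi>)"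
  using psi by (simp add: psi_calculus_def)
lemma substT_ok: "subst_ok Pc (swT Pc) (substT Pc)" using psi by (simp add: psi_calculus_def)
lemma substC_ok: "subst_ok Pc (swC Pc) (substC Pc)" using psi by (simp add: psi_calculus_def)
lemma substA_ok: "subst_ok Pc (swA Pc) (substA Pc)" using psi by (simp add: psi_calculus_def)

lemma aeq_sym: "aeq Pc X Y \<Longrightarrow> aeq Pc Y X" by (simp add: aeq_def)
lemma aeq_trans[trans]: "aeq Pc X Y \<Longrightarrow> aeq Pc Y Z \<Longrightarrow> aeq Pc X Z" by (simp add: aeq_def)
lemma aeq_compl: "aeq Pc X Y \<Longrightarrow> aeq Pc (comp Pc X Z) (comp Pc Y Z)"
  using psi by (simp add: psi_calculus_def)
lemma aeq_unit: "aeq Pc (comp Pc X (unitA Pc)) X"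
  using psi by (simp add: psi_calculus_def)
lemma aeq_assoc: "aeq Pc (comp Pc (comp Pc X Y) Z) (comp Pc X (comp Pc Y Z))"
  using psi by (simp add: psi_calculus_def)
lemma aeq_comm: "aeq Pc (comp Pc X Y) (comp Pc Y X)"
  using psi by (simp add: psi_calculus_def)
lemma aeq_compr: "aeq Pc X Y \<Longrightarrow> aeq Pc (comp Pc Z X) (comp Pc Z Y)"
  by (meson aeq_comm aeq_compl aeq_trans)
lemma aeq_unitl: "aeq Pc (comp Pc (unitA Pc) X) X"
  by (meson aeq_comm aeq_trans aeq_unit)

text \<open>Extending one component of a composition extends the composition; these are the two
  shapes needed when a frame of a parallel composition grows on the left or on the right.\<close>

lemma aeq_extend_left:
  assumes "aeq Pc (comp Pc X \<Psi>') X'"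
  shows "aeq Pc (comp Pc (comp Pc X Y) \<Psi>') (comp Pc X' Y)"
proof -
  have "aeq Pc (comp Pc (comp Pc X Y) \<Psi>') (comp Pc X (comp Pc Y \<Psi>'))" by (rule aeq_assoc)
  also have "aeq Pc \<dots> (comp Pc X (comp Pc \<Psi>' Y))" by (intro aeq_compr aeq_comm)
  also have "aeq Pc \<dots> (comp Pc (comp Pc X \<Psi>') Y)" by (rule aeq_sym[OF aeq_assoc])
  also have "aeq Pc \<dots> (comp Pc X' Y)" by (rule aeq_compl[OF assms])
  finally show ?thesis .
qed

lemma aeq_extend_right:
  assumes "aeq Pc (comp Pc Y \<Psi>') Y'"
  shows "aeq Pc (comp Pc (comp Pc X Y) \<Psi>') (comp Pc X Y')"
  using aeq_trans[OF aeq_assoc aeq_compr[OF assms]] .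

lemma aeq_swap: assumes "aeq Pc X Y" shows "aeq Pc (swA Pc a b X) (swA Pc a b Y)"
  unfolding aeq_def
proof
  fix \<phi>
  have "ent Pc (swA Pc a b X) \<phi> = ent Pc X (swC Pc a b \<phi>)"
    using ent_eqvt[of X "swC Pc a b \<phi>" a b] by simp
  also have "\<dots> = ent Pc Y (swC Pc a b \<phi>)" using assms by (simp add: aeq_def)
  also have "\<dots> = ent Pc (swA Pc a b Y) \<phi>"
    using ent_eqvt[of Y "swC Pc a b \<phi>" a b] by simp
  finally show "ent Pc (swA Pc a b X) \<phi> = ent Pc (swA Pc a b Y) \<phi>" .
qed

lemma supp_unit[simp]: "supp (swA Pc) (unitA Pc) = {}"
  using A.supp_le[of "{}" "unitA Pc"] by simp

lemma supp_comp: "supp (swA Pc) (comp Pc X Y) \<subseteq> supp (swA Pc) X \<union> supp (swA Pc) Y"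
  by (rule A.supp_le) (auto simp: comp_eqvt A.fresh_swap)

lemma swap_agent_invol[simp]: "swap_agent Pc a b (swap_agent Pc a b P) = P"
proof (induct P)
  case (PCase cs)
  have "\<forall>p\<in>set cs. map_prod (swC Pc a b) (swap_agent Pc a b)
          (map_prod (swC Pc a b) (swap_agent Pc a b) p) = p"
    using PCase by (force simp: prod_set_simps map_prod_def)
  then show ?case by (simp add: map_idI)
qed (simp_all add: comp_def map_idI)

lemma fn_PCase: "fn Pc (PCase cs) = (\<Union>p\<in>set cs. supp (swC Pc) (fst p) \<union> fn Pc (snd p))"
  by (auto simp: map_prod_def case_prod_beta)

lemma fn_PCase_nth: "fn Pc (PCase cs) = (\<Union>i<length cs. supp (swC Pc) (fst (cs!i)) \<union> fn Pc (snd (cs!i)))"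
  unfolding fn_PCase by (auto simp: set_conv_nth)

lemma fn_swap: "fn Pc (swap_agent Pc a b P) = nswap a b ` fn Pc P"
proof (induct P)
  case (PCase cs)
  then show ?case
    by (auto simp: fn_PCase C.supp_swap image_Un image_UN simp del: fn.simps)
next
  case (PIn M xs N P)
  then show ?case by (simp add: T.supp_swap set_eq_iff nswap_in_image)
next
  case (PRes x P)
  then show ?case by (auto simp: image_set_diff[OF nswap_inj])
qed (auto simp: T.supp_swap A.supp_swap image_Un)

lemma finite_fn[simp]: "finite (fn Pc P)"
proof (induct P)
  case (PCase cs) then show ?case by (auto simp: fn_PCase simp del: fn.simps)
qed auto

lemma guarded_swap[simp]: "guarded (swap_agent Pc a b P) = guarded P"
  by (induct P) auto

lemma wf_swap[simp]: "wf_agent Pc (swap_agent Pc a b P) = wf_agent Pc P"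
proof (induct P)
  case (PIn M xs N P)
  have "distinct (map (nswap a b) xs) = distinct xs" by (simp add: distinct_map nswap_inj inj_on_def)
  moreover have "(set (map (nswap a b) xs) \<subseteq> supp (swT Pc) (swT Pc a b N)) = (set xs \<subseteq> supp (swT Pc) N)"
    by (auto simp: T.supp_swap_iff)
  ultimately show ?case using PIn by simp
qed auto

lemma alpha_fn: "alpha Pc P Q \<Longrightarrow> fn Pc P = fn Pc Q"
proof (induct rule: alpha.induct)
  case (a_swap a P b)
  then show ?case by (simp add: fn_swap nswap_image_fix)
next
  case (a_case cs ds)
  then show ?case unfolding fn_PCase_nth by auto
qed auto

lemma alpha_wf: "alpha Pc P Q \<Longrightarrow> (wf_agent Pc P = wf_agent Pc Q) \<and> (guarded P = guarded Q)"
proof (induct rule: alpha.induct)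
  case (a_case cs ds)
  have "(\<forall>p\<in>set cs. wf_agent Pc (snd p)) = (\<forall>p\<in>set ds. wf_agent Pc (snd p))"
    using a_case by (auto simp: all_set_conv_all_nth)
  moreover have "(\<forall>p\<in>set cs. guarded (snd p)) = (\<forall>p\<in>set ds. guarded (snd p))"
    using a_case by (auto simp: all_set_conv_all_nth)
  ultimately show ?case by (simp add: map_prod_def case_prod_beta)
qed auto

text \<open>An input action has no binders: alpha-equivalent residuals of an input keep the action
  and have alpha-equivalent derivatives.\<close>

lemma resid_alpha_input: "resid_alpha Pc r s \<Longrightarrow>
   (\<forall>M N. fst r = AIn M N \<longrightarrow> fst s = AIn M N \<and> alpha Pc (snd r) (snd s)) \<and>
   (\<forall>M N. fst s = AIn M N \<longrightarrow> fst r = AIn M N \<and> alpha Pc (snd r) (snd s))"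
proof (induct rule: resid_alpha.induct)
  case (ra_sym r s)
  then show ?case by (meson alpha.a_sym)
next
  case (ra_trans r s t)
  then show ?case by (meson alpha.a_trans)
next
  case (ra_swap a r b)
  obtain \<alpha> P where r: "r = (\<alpha>, P)" by fastforce
  show ?case
  proof (cases \<alpha>)
    case (AIn M N)
    with ra_swap r have "a \<notin> supp (swT Pc) M" "b \<notin> supp (swT Pc) M"
      "a \<notin> supp (swT Pc) N" "b \<notin> supp (swT Pc) N" "a \<notin> fn Pc P" "b \<notin> fn Pc P"
      by (auto simp: fn_res_def)
    then show ?thesis using r AIn by (simp add: swap_res_def T.fresh_swap alpha.a_swap)
  qed (use r in \<open>simp_all add: swap_res_def\<close>)
qed simp

corollary resid_alpha_inputD:
  "resid_alpha Pc (\<alpha>, P') (AIn M N, Q') \<Longrightarrow> \<alpha> = AIn M N \<and> alpha Pc P' Q'"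
  by (metis resid_alpha_input fst_conv snd_conv)

lemma fn_frame_swap: "fn_frame Pc (swap_frame Pc a b F) = nswap a b ` fn_frame Pc F"
  by (simp add: fn_frame_def swap_frame_def A.supp_swap image_set_diff[OF nswap_inj])

lemma fn_frame_swap_fresh: "a \<notin> fn_frame Pc F \<Longrightarrow> b \<notin> fn_frame Pc F \<Longrightarrow>
  fn_frame Pc (swap_frame Pc a b F) = fn_frame Pc F"
  by (simp add: fn_frame_swap nswap_image_fix)

lemma frame_alpha_fn: "frame_alpha Pc F G \<Longrightarrow> fn_frame Pc F = fn_frame Pc G"
  by (induct rule: frame_alpha.induct) (auto simp: fn_frame_swap_fresh)

lemma swap_frame_comp: "swap_frame Pc a b (swap_frame Pc c d F) =
  swap_frame Pc (nswap a b c) (nswap a b d) (swap_frame Pc a b F)"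
  by (simp add: swap_frame_def A.sw_comp[of a b c d] comp_def nswap_comp[of a b c d])

lemma frame_alpha_eqvt: "frame_alpha Pc F G \<Longrightarrow>
   frame_alpha Pc (swap_frame Pc a b F) (swap_frame Pc a b G)"
proof (induct rule: frame_alpha.induct)
  case (fa_swap c F d)
  then show ?case
    by (simp add: swap_frame_comp[of a b c d] frame_alpha.fa_swap fn_frame_swap nswap_in_image)
qed (auto intro: frame_alpha.intros)

lemma frame_of_supp: "frame_of Pc P F \<Longrightarrow> fn_frame Pc F \<subseteq> fn Pc P"
proof (induct rule: frame_of.induct)
  case (f_par P b1 \<Psi>1 Q b2 \<Psi>2)
  then show ?case using supp_comp[of \<Psi>1 \<Psi>2] by (auto simp: fn_frame_def)
next
  case (f_alpha P F G)
  then show ?case by (simp add: frame_alpha_fn)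
next
  case (f_alpha_agent P Q F)
  then show ?case by (simp add: alpha_fn)
qed (auto simp: fn_frame_def)

lemma frame_of_supp': "frame_of Pc P (bs, \<Psi>) \<Longrightarrow> supp (swA Pc) \<Psi> \<subseteq> fn Pc P \<union> set bs"
  using frame_of_supp[of P "(bs, \<Psi>)"] by (auto simp: fn_frame_def)

lemma frame_of_par:
  assumes "frame_of Pc P (b1, \<Psi>1)" "frame_of Pc Q (b2, \<Psi>2)"
    and "set b1 \<inter> (set b2 \<union> fn Pc Q) = {}" "set b2 \<inter> fn Pc P = {}"
  shows "frame_of Pc (PPar P Q) (b1 @ b2, comp Pc \<Psi>1 \<Psi>2)"
  using frame_of_supp'[OF assms(1)] frame_of_supp'[OF assms(2)] assms
  by (intro frame_of.f_par) auto

end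

text \<open>A permutation is represented by a list of swappings, applied right to left.\<close>

definition perm_names :: "(name \<times> name) list \<Rightarrow> name set" where
  "perm_names q = fst ` set q \<union> snd ` set q"

definition perm_assn :: "('t, 'c, 'a, 'z) psi_scheme \<Rightarrow> (name \<times> name) list \<Rightarrow> 'a \<Rightarrow> 'a" where
  "perm_assn Pc q X = foldr (\<lambda>p Y. swA Pc (fst p) (snd p) Y) q X"

definition perm_frame :: "('t, 'c, 'a, 'z) psi_scheme \<Rightarrow> (name \<times> name) list \<Rightarrow> 'a frame \<Rightarrow> 'a frame" where
  "perm_frame Pc q F = foldr (\<lambda>p G. swap_frame Pc (fst p) (snd p) G) q F"

text \<open>Conjugating a permutation by the swapping (a c).\<close>

definition rename_perm :: "name \<Rightarrow> name \<Rightarrow> (name \<times> name) list \<Rightarrow> (name \<times> name) list" where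
  "rename_perm a c q = map (\<lambda>p. (nswap a c (fst p), nswap a c (snd p))) q"

lemma perm_names_Nil[simp]: "perm_names [] = {}" by (simp add: perm_names_def)
lemma perm_names_Cons[simp]: "perm_names (p # q) = {fst p, snd p} \<union> perm_names q"
  by (auto simp: perm_names_def)
lemma perm_names_append[simp]: "perm_names (q1 @ q2) = perm_names q1 \<union> perm_names q2"
  by (auto simp: perm_names_def)
lemma perm_names_rev[simp]: "perm_names (rev q) = perm_names q" by (auto simp: perm_names_def)
lemma finite_perm_names[simp]: "finite (perm_names q)" by (simp add: perm_names_def)
lemma perm_names_rename: "perm_names (rename_perm a c q) = nswap a c ` perm_names q"
  by (induct q) (auto simp: rename_perm_def)

lemma perm_assn_Nil[simp]: "perm_assn Pc [] X = X" by (simp add: perm_assn_def)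
lemma perm_assn_Cons[simp]: "perm_assn Pc (p # q) X = swA Pc (fst p) (snd p) (perm_assn Pc q X)"
  by (simp add: perm_assn_def)
lemma perm_assn_append: "perm_assn Pc (q1 @ q2) X = perm_assn Pc q1 (perm_assn Pc q2 X)"
  by (simp add: perm_assn_def)
lemma perm_frame_Nil[simp]: "perm_frame Pc [] F = F" by (simp add: perm_frame_def)
lemma perm_frame_Cons[simp]:
  "perm_frame Pc (p # q) F = swap_frame Pc (fst p) (snd p) (perm_frame Pc q F)"
  by (simp add: perm_frame_def)
lemma snd_perm_frame: "snd (perm_frame Pc q F) = perm_assn Pc q (snd F)"
  by (induct q) (auto simp: swap_frame_def)

context psi_calc begin

lemma perm_assn_fresh: "perm_names q \<inter> supp (swA Pc) X = {} \<Longrightarrow> perm_assn Pc q X = X"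
  by (induct q) (auto simp: A.fresh_swap)

lemma perm_assn_comp: "perm_assn Pc q (comp Pc X Y) = comp Pc (perm_assn Pc q X) (perm_assn Pc q Y)"
  by (induct q) (auto simp: comp_eqvt)

lemma aeq_perm_assn: "aeq Pc X Y \<Longrightarrow> aeq Pc (perm_assn Pc q X) (perm_assn Pc q Y)"
  by (induct q) (auto simp: aeq_swap)

lemma perm_assn_rev: "perm_assn Pc (rev q) (perm_assn Pc q X) = X"
  by (induct q arbitrary: X) (auto simp: perm_assn_append)

lemma perm_assn_rename: "swA Pc a c (perm_assn Pc q X) = perm_assn Pc (rename_perm a c q) (swA Pc a c X)"
  by (induct q) (auto simp: rename_perm_def A.sw_comp[of a c])

lemma supp_perm_assn_out: "perm_names q \<inter> U = {} \<Longrightarrow>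
  supp (swA Pc) (perm_assn Pc q X) \<inter> U = supp (swA Pc) X \<inter> U"
proof (induct q)
  case (Cons p q)
  then have "fst p \<notin> U" "snd p \<notin> U" by auto
  then have "x \<in> U \<Longrightarrow> nswap (fst p) (snd p) x = x" for x by (metis nswap_simps(3))
  then show ?case using Cons by (auto simp: A.supp_swap_iff)
qed simp

text \<open>If every name of S moved by q is fresh both for X and for its image, then q can be
  replaced by a permutation with the same effect on X that moves no name of S: each such name
  is traded for a completely fresh one.\<close>

lemma perm_avoid:
  assumes "finite S"
    and "\<forall>a\<in>perm_names q \<inter> S. a \<notin> supp (swA Pc) X \<and> a \<notin> supp (swA Pc) (perm_assn Pc q X)"
  shows "\<exists>q'. perm_assn Pc q' X = perm_assn Pc q X \<and> perm_names q' \<inter> S = {}"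
  using assms(2)
proof (induct "card (perm_names q \<inter> S)" arbitrary: q rule: less_induct)
  case less
  show ?case
  proof (cases "perm_names q \<inter> S = {}")
    case False
    then obtain a where a: "a \<in> perm_names q \<inter> S" by blast
    have "finite (S \<union> perm_names q \<union> supp (swA Pc) X \<union> supp (swA Pc) (perm_assn Pc q X))"
      using assms by simp
    then obtain c where c: "c \<notin> S \<union> perm_names q \<union> supp (swA Pc) X \<union> supp (swA Pc) (perm_assn Pc q X)"
      using fresh_name by meson
    have fa: "a \<notin> supp (swA Pc) X" "a \<notin> supp (swA Pc) (perm_assn Pc q X)" using less.prems a by auto
    define q1 where "q1 = rename_perm a c q"
    have "perm_assn Pc q1 X = perm_assn Pc q1 (swA Pc a c X)" using fa c by (simp add: A.fresh_swap)
    also have "\<dots> = swA Pc a c (perm_assn Pc q X)" by (simp add: perm_assn_rename q1_def)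
    also have "\<dots> = perm_assn Pc q X" using fa c by (simp add: A.fresh_swap)
    finally have eq: "perm_assn Pc q1 X = perm_assn Pc q X" .
    have "perm_names q1 = nswap a c ` perm_names q" by (simp add: q1_def perm_names_rename)
    then have nq1: "perm_names q1 = (perm_names q - {a}) \<union> {c}"
      using a c by (auto simp: nswap_in_image nswap_def split: if_splits)
    then have "perm_names q1 \<inter> S = (perm_names q \<inter> S) - {a}" using c by auto
    then have "card (perm_names q1 \<inter> S) < card (perm_names q \<inter> S)"
      using a assms(1) card_Diff1_less[of "perm_names q \<inter> S" a] by auto
    moreover have "\<forall>b\<in>perm_names q1 \<inter> S. b \<notin> supp (swA Pc) X \<and> b \<notin> supp (swA Pc) (perm_assn Pc q1 X)"
      using less.prems nq1 c eq by auto
    ultimately show ?thesis using less.hyps eq by metis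
  qed blast
qed

section \<open>Frame equivalence\<close>

text \<open>This is the sense in which the frame
  of an agent is unique.\<close>

definition frame_equiv :: "'a frame \<Rightarrow> 'a frame \<Rightarrow> bool" where
  "frame_equiv F G \<longleftrightarrow> fn_frame Pc F = fn_frame Pc G \<and>
     (\<exists>q. snd G = perm_assn Pc q (snd F) \<and> perm_names q \<inter> fn_frame Pc F = {})"

lemma frame_equiv_refl[simp]: "frame_equiv F F"
  unfolding frame_equiv_def by (metis perm_assn_Nil perm_names_Nil inf_bot_left)

lemma frame_equiv_sym: "frame_equiv F G \<Longrightarrow> frame_equiv G F"
  unfolding frame_equiv_def by (metis perm_assn_rev perm_names_rev)

lemma frame_equiv_trans: "frame_equiv F G \<Longrightarrow> frame_equiv G H \<Longrightarrow> frame_equiv F H"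
  unfolding frame_equiv_def
  by (metis (no_types, lifting) perm_assn_append perm_names_append Int_Un_distrib2 sup_eq_bot_iff)

lemma frame_alpha_equiv: "frame_alpha Pc F G \<Longrightarrow> frame_equiv F G"
proof (induct rule: frame_alpha.induct)
  case (fa_swap a F b)
  then have "fn_frame Pc F = fn_frame Pc (swap_frame Pc a b F)" by (simp add: fn_frame_swap_fresh)
  with fa_swap show ?case unfolding frame_equiv_def
    by (intro conjI exI[of _ "[(a, b)]"]) (auto simp: swap_frame_def)
qed (auto intro: frame_equiv_sym frame_equiv_trans)

lemma frame_equiv_res: "frame_equiv (bs, \<Psi>) (bs', \<Psi>') \<Longrightarrow> frame_equiv (x # bs, \<Psi>) (x # bs', \<Psi>')"
  unfolding frame_equiv_def fn_frame_def by auto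

lemma frame_alpha_fresh:
  assumes "finite D" shows "\<exists>F'. frame_alpha Pc F F' \<and> set (fst F') \<inter> D = {}"
proof (induct "card (set (fst F) \<inter> D)" arbitrary: F rule: less_induct)
  case less
  show ?case
  proof (cases "set (fst F) \<inter> D = {}")
    case False
    then obtain b where b: "b \<in> set (fst F) \<inter> D" by blast
    have "finite (D \<union> set (fst F) \<union> supp (swA Pc) (snd F))" using assms by simp
    then obtain c where c: "c \<notin> D \<union> set (fst F) \<union> supp (swA Pc) (snd F)"
      using fresh_name by meson
    define F1 where "F1 = swap_frame Pc b c F"
    have fa: "frame_alpha Pc F F1"
      unfolding F1_def by (rule frame_alpha.fa_swap) (use b c in \<open>auto simp: fn_frame_def\<close>)
    have "set (fst F1) = (set (fst F) - {b}) \<union> {c}"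
      using b c by (auto simp: F1_def swap_frame_def nswap_def split: if_splits)
    then have "set (fst F1) \<inter> D = (set (fst F) \<inter> D) - {b}" using c by auto
    then have "card (set (fst F1) \<inter> D) < card (set (fst F) \<inter> D)"
      using b assms card_Diff1_less[of "set (fst F) \<inter> D" b] by auto
    then obtain F' where "frame_alpha Pc F1 F'" "set (fst F') \<inter> D = {}" using less.hyps by blast
    then show ?thesis using fa by (blast intro: frame_alpha.fa_trans)
  qed (blast intro: frame_alpha.fa_refl)
qed

lemma perm_frame_alpha: "perm_names q \<inter> fn_frame Pc F = {} \<Longrightarrow>
  frame_alpha Pc F (perm_frame Pc q F) \<and> fn_frame Pc (perm_frame Pc q F) = fn_frame Pc F"
proof (induct q)
  case (Cons p q)
  then have ih: "frame_alpha Pc F (perm_frame Pc q F)" "fn_frame Pc (perm_frame Pc q F) = fn_frame Pc F"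
    and p: "fst p \<notin> fn_frame Pc F" "snd p \<notin> fn_frame Pc F" by auto
  have "frame_alpha Pc (perm_frame Pc q F) (swap_frame Pc (fst p) (snd p) (perm_frame Pc q F))"
    by (rule frame_alpha.fa_swap) (use ih p in auto)
  then show ?case using ih p by (auto simp: fn_frame_swap_fresh intro: frame_alpha.fa_trans)
qed (simp add: frame_alpha.fa_refl)

lemma perm_frame_binders_fresh:
  "set (fst F) \<inter> S = {} \<Longrightarrow> perm_names q \<inter> S = {} \<Longrightarrow> set (fst (perm_frame Pc q F)) \<inter> S = {}"
  by (induct q) (auto simp: swap_frame_def nswap_def split: if_splits)

lemma frame_equiv_avoid:
  assumes "frame_equiv (b, \<Psi>) (b', \<Psi>')" "finite S" "set b \<inter> S = {}" "set b' \<inter> S = {}"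
  shows "\<exists>q. \<Psi>' = perm_assn Pc q \<Psi> \<and> perm_names q \<inter> (S \<union> fn_frame Pc (b, \<Psi>)) = {}"
proof -
  define U where "U = fn_frame Pc (b, \<Psi>)"
  obtain q where q: "\<Psi>' = perm_assn Pc q \<Psi>" "perm_names q \<inter> U = {}" and U': "U = fn_frame Pc (b', \<Psi>')"
    using assms(1) by (auto simp: frame_equiv_def U_def)
  have "\<exists>q'. perm_assn Pc q' \<Psi> = perm_assn Pc q \<Psi> \<and> perm_names q' \<inter> (S \<union> U) = {}"
  proof (rule perm_avoid)
    show "finite (S \<union> U)" using assms(2) by (simp add: U_def fn_frame_def)
    show "\<forall>a\<in>perm_names q \<inter> (S \<union> U). a \<notin> supp (swA Pc) \<Psi> \<and> a \<notin> supp (swA Pc) (perm_assn Pc q \<Psi>)"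
      using q assms(3,4) U' by (auto simp: U_def fn_frame_def)
  qed
  then obtain q' where "perm_assn Pc q' \<Psi> = \<Psi>'" "perm_names q' \<inter> (S \<union> U) = {}"
    using q(1) by auto
  then show ?thesis unfolding U_def by auto
qed

lemma fn_frame_par:
  assumes "set b2 \<inter> supp (swA Pc) \<Psi>1 = {}" "set b1 \<inter> supp (swA Pc) \<Psi>2 = {}"
  shows "fn_frame Pc (b1 @ b2, comp Pc \<Psi>1 \<Psi>2) =
    supp (swA Pc) (comp Pc \<Psi>1 \<Psi>2) \<inter> (fn_frame Pc (b1, \<Psi>1) \<union> fn_frame Pc (b2, \<Psi>2))"
  using assms supp_comp[of \<Psi>1 \<Psi>2] by (auto simp: fn_frame_def)

text \<open>The two permutations
  relating the components are first made to avoid the other component's assertion (after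
  renaming the binders of the right component away from the left one), so that they can be
  composed without interfering.\<close>

lemma frame_equiv_par:
  assumes fe1: "frame_equiv (b1, \<Psi>1) (b1', \<Psi>1')" and fe2: "frame_equiv (b2, \<Psi>2) (b2', \<Psi>2')"
    and d1: "set b1 \<inter> (set b2 \<union> supp (swA Pc) \<Psi>2) = {}" "set b2 \<inter> (set b1 \<union> supp (swA Pc) \<Psi>1) = {}"
    and d2: "set b1' \<inter> (set b2' \<union> supp (swA Pc) \<Psi>2') = {}" "set b2' \<inter> (set b1' \<union> supp (swA Pc) \<Psi>1') = {}"
  shows "frame_equiv (b1 @ b2, comp Pc \<Psi>1 \<Psi>2) (b1' @ b2', comp Pc \<Psi>1' \<Psi>2')"
proof -
  define U1 where "U1 = fn_frame Pc (b1, \<Psi>1)"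
  define U2 where "U2 = fn_frame Pc (b2, \<Psi>2)"
  have "finite (set b1 \<union> set b1' \<union> supp (swA Pc) \<Psi>1 \<union> supp (swA Pc) \<Psi>1')" by simp
  from frame_alpha_fresh[OF this, of "(b2, \<Psi>2)"] obtain b2'' \<Psi>2'' where
    alpha2: "frame_alpha Pc (b2, \<Psi>2) (b2'', \<Psi>2'')"
    and b2'': "set b2'' \<inter> (set b1 \<union> set b1' \<union> supp (swA Pc) \<Psi>1 \<union> supp (swA Pc) \<Psi>1') = {}"
    by (metis prod.collapse)
  have fe2'': "frame_equiv (b2, \<Psi>2) (b2'', \<Psi>2'')" by (rule frame_alpha_equiv[OF alpha2])
  have U: "U1 = fn_frame Pc (b1', \<Psi>1')" "U2 = fn_frame Pc (b2', \<Psi>2')" "U2 = fn_frame Pc (b2'', \<Psi>2'')"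
    using fe1 fe2 fe2'' by (simp_all add: frame_equiv_def U1_def U2_def)
  have S1: "U1 \<subseteq> supp (swA Pc) \<Psi>1" "U1 \<subseteq> supp (swA Pc) \<Psi>1'"
    and S2: "U2 \<subseteq> supp (swA Pc) \<Psi>2" "U2 \<subseteq> supp (swA Pc) \<Psi>2'" "U2 \<subseteq> supp (swA Pc) \<Psi>2''"
    and S2'': "supp (swA Pc) \<Psi>2'' \<subseteq> U2 \<union> set b2''"
    using U by (auto simp: U1_def U2_def fn_frame_def)
  obtain r where r: "\<Psi>2'' = perm_assn Pc r \<Psi>2" "perm_names r \<inter> (supp (swA Pc) \<Psi>1 \<union> U2) = {}"
    using frame_equiv_avoid[OF fe2'', of "supp (swA Pc) \<Psi>1"] d1 b2'' by (auto simp: U2_def)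
  have "set b1 \<inter> supp (swA Pc) \<Psi>2'' = {}" "set b1' \<inter> supp (swA Pc) \<Psi>2'' = {}"
    using d1 d2 b2'' S2 S2'' by blast+
  then obtain q where q: "\<Psi>1' = perm_assn Pc q \<Psi>1" "perm_names q \<inter> (supp (swA Pc) \<Psi>2'' \<union> U1) = {}"
    using frame_equiv_avoid[OF fe1, of "supp (swA Pc) \<Psi>2''"] by (auto simp: U1_def)
  obtain s where s: "\<Psi>2' = perm_assn Pc s \<Psi>2''" "perm_names s \<inter> (supp (swA Pc) \<Psi>1' \<union> U2) = {}"
    using frame_equiv_avoid[OF frame_equiv_trans[OF frame_equiv_sym[OF fe2''] fe2], of "supp (swA Pc) \<Psi>1'"]
      d2 b2'' U(3) by auto
  define qq where "qq = s @ q @ r"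
  have "perm_assn Pc r \<Psi>1 = \<Psi>1" "perm_assn Pc q \<Psi>2'' = \<Psi>2''" "perm_assn Pc s \<Psi>1' = \<Psi>1'"
    using r q s by (auto intro: perm_assn_fresh)
  then have act: "perm_assn Pc qq (comp Pc \<Psi>1 \<Psi>2) = comp Pc \<Psi>1' \<Psi>2'"
    using r q s by (simp add: qq_def perm_assn_append perm_assn_comp)
  have nq: "perm_names qq \<inter> (U1 \<union> U2) = {}" using r q s S1 S2 by (auto simp: qq_def)
  have "fn_frame Pc (b1 @ b2, comp Pc \<Psi>1 \<Psi>2) = supp (swA Pc) (comp Pc \<Psi>1 \<Psi>2) \<inter> (U1 \<union> U2)"
    unfolding U1_def U2_def by (rule fn_frame_par) (use d1 in auto)
  moreover have "fn_frame Pc (b1' @ b2', comp Pc \<Psi>1' \<Psi>2') = supp (swA Pc) (comp Pc \<Psi>1' \<Psi>2') \<inter> (U1 \<union> U2)"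
    unfolding U(1,2) by (rule fn_frame_par) (use d2 in auto)
  moreover have "supp (swA Pc) (comp Pc \<Psi>1' \<Psi>2') \<inter> (U1 \<union> U2) = supp (swA Pc) (comp Pc \<Psi>1 \<Psi>2) \<inter> (U1 \<union> U2)"
    using supp_perm_assn_out[OF nq] act by metis
  ultimately show ?thesis using act nq unfolding frame_equiv_def by (metis snd_conv Int_assoc Int_commute Int_empty_left)
qed

end

section \<open>Uniqueness of frames\<close>

text \<open>Structural frames: the rules of \<open>frame_of\<close> without alpha-conversion of the agent.  Every
  structural frame is determined by the syntax of the agent up to frame equivalence, and
  every frame is equivalent to a structural one; hence all frames of an agent are equivalent.\<close>

inductive frame_struct :: "('t, 'c, 'a, 'z) psi_scheme \<Rightarrow> ('t, 'c, 'a) agent \<Rightarrow> 'a frame \<Rightarrow> bool"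
  for Pc where
  fs_nil: "frame_struct Pc PNil ([], unitA Pc)"
| fs_out: "frame_struct Pc (POut M N P) ([], unitA Pc)"
| fs_in: "frame_struct Pc (PIn M xs N P) ([], unitA Pc)"
| fs_case: "frame_struct Pc (PCase cs) ([], unitA Pc)"
| fs_bang: "frame_struct Pc (PBang P) ([], unitA Pc)"
| fs_assert: "frame_struct Pc (PAssert \<Psi>) ([], \<Psi>)"
| fs_res: "frame_struct Pc P (bs, \<Psi>) \<Longrightarrow> frame_struct Pc (PRes x P) (x # bs, \<Psi>)"
| fs_par: "frame_struct Pc P (b1, \<Psi>1) \<Longrightarrow> frame_struct Pc Q (b2, \<Psi>2) \<Longrightarrow>
     set b1 \<inter> (set b2 \<union> supp (swA Pc) \<Psi>2) = {} \<Longrightarrow>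
     set b2 \<inter> (set b1 \<union> supp (swA Pc) \<Psi>1) = {} \<Longrightarrow>
     frame_struct Pc (PPar P Q) (b1 @ b2, comp Pc \<Psi>1 \<Psi>2)"
| fs_alpha: "frame_struct Pc P F \<Longrightarrow> frame_alpha Pc F G \<Longrightarrow> frame_struct Pc P G"

text \<open>The agents whose frame is the unit frame.\<close>

definition unit_framed :: "('t, 'c, 'a) agent \<Rightarrow> bool" where
  "unit_framed X = (case X of PRes _ _ \<Rightarrow> False | PPar _ _ \<Rightarrow> False | PAssert _ \<Rightarrow> False | _ \<Rightarrow> True)"

lemma unit_framed_simps[simp]: "unit_framed PNil" "unit_framed (POut M N P)" "unit_framed (PIn M xs N P)"
  "unit_framed (PCase cs)" "unit_framed (PBang P)" "\<not> unit_framed (PRes x P)" "\<not> unit_framed (PPar P Q)"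
  "\<not> unit_framed (PAssert \<Psi>)"
  by (simp_all add: unit_framed_def)

context psi_calc begin

lemma frame_struct_frame_of: "frame_struct Pc P F \<Longrightarrow> frame_of Pc P F"
  by (induct rule: frame_struct.induct) (auto intro: frame_of.intros)

lemma frame_struct_eqvt:
  "frame_struct Pc P F \<Longrightarrow> frame_struct Pc (swap_agent Pc a b P) (swap_frame Pc a b F)"
proof (induct rule: frame_struct.induct)
  case (fs_res P bs \<Psi> x)
  then show ?case by (simp add: swap_frame_def frame_struct.fs_res)
next
  case (fs_par P b1 \<Psi>1 Q b2 \<Psi>2)
  have d: "set (map (nswap a b) b1) \<inter> (set (map (nswap a b) b2) \<union> supp (swA Pc) (swA Pc a b \<Psi>2)) = {}"
    "set (map (nswap a b) b2) \<inter> (set (map (nswap a b) b1) \<union> supp (swA Pc) (swA Pc a b \<Psi>1)) = {}"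
    using fs_par(5,6) by (auto simp: A.supp_swap_iff)
  show ?case using frame_struct.fs_par[OF fs_par(2)[unfolded swap_frame_def, simplified]
        fs_par(4)[unfolded swap_frame_def, simplified] d]
    by (simp add: swap_frame_def comp_eqvt)
next
  case (fs_alpha P F G)
  then show ?case by (blast intro: frame_struct.fs_alpha frame_alpha_eqvt)
qed (auto simp: swap_frame_def intro: frame_struct.intros)

lemma frame_struct_unitD: "frame_struct Pc X G \<Longrightarrow> unit_framed X \<Longrightarrow> frame_equiv ([], unitA Pc) G"
  by (induct rule: frame_struct.induct) (auto intro: frame_equiv_trans frame_alpha_equiv)

lemma frame_struct_assertD: "frame_struct Pc X G \<Longrightarrow> X = PAssert \<Psi> \<Longrightarrow> frame_equiv ([], \<Psi>) G"
  by (induct rule: frame_struct.induct) (auto intro: frame_equiv_trans frame_alpha_equiv)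

lemma frame_struct_resD: "frame_struct Pc X G \<Longrightarrow> X = PRes x P \<Longrightarrow>
  \<exists>bs \<Psi>. frame_struct Pc P (bs, \<Psi>) \<and> frame_equiv (x # bs, \<Psi>) G"
proof (induct rule: frame_struct.induct)
  case (fs_res P bs \<Psi> y)
  then show ?case using frame_equiv_refl by blast
next
  case (fs_alpha P F G)
  then show ?case by (blast intro: frame_equiv_trans frame_alpha_equiv)
qed auto

lemma frame_struct_parD: "frame_struct Pc X G \<Longrightarrow> X = PPar P Q \<Longrightarrow>
  \<exists>b1 \<Psi>1 b2 \<Psi>2. frame_struct Pc P (b1, \<Psi>1) \<and> frame_struct Pc Q (b2, \<Psi>2) \<and>
     set b1 \<inter> (set b2 \<union> supp (swA Pc) \<Psi>2) = {} \<and> set b2 \<inter> (set b1 \<union> supp (swA Pc) \<Psi>1) = {} \<and>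
     frame_equiv (b1 @ b2, comp Pc \<Psi>1 \<Psi>2) G"
proof (induct rule: frame_struct.induct)
  case (fs_par P' b1 \<Psi>1 Q' b2 \<Psi>2)
  then show ?case using frame_equiv_refl by blast
next
  case (fs_alpha P F G)
  then show ?case by (blast intro: frame_equiv_trans frame_alpha_equiv)
qed auto

lemma frame_struct_unique: "frame_struct Pc P F \<Longrightarrow> frame_struct Pc P G \<Longrightarrow> frame_equiv F G"
proof (induct P arbitrary: F G)
  case (PAssert \<Psi>)
  then show ?case using frame_struct_assertD by (blast intro: frame_equiv_trans frame_equiv_sym)
next
  case (PRes x P)
  obtain bs \<Psi> where 1: "frame_struct Pc P (bs, \<Psi>)" "frame_equiv (x # bs, \<Psi>) F"
    using frame_struct_resD[OF PRes(2)] by blast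
  obtain bs' \<Psi>' where 2: "frame_struct Pc P (bs', \<Psi>')" "frame_equiv (x # bs', \<Psi>') G"
    using frame_struct_resD[OF PRes(3)] by blast
  have "frame_equiv (x # bs, \<Psi>) (x # bs', \<Psi>')" using PRes(1)[OF 1(1) 2(1)] by (rule frame_equiv_res)
  then show ?case using 1 2 by (blast intro: frame_equiv_trans frame_equiv_sym)
next
  case (PPar P Q)
  obtain b1 \<Psi>1 b2 \<Psi>2 where 1: "frame_struct Pc P (b1, \<Psi>1)" "frame_struct Pc Q (b2, \<Psi>2)"
     "set b1 \<inter> (set b2 \<union> supp (swA Pc) \<Psi>2) = {}" "set b2 \<inter> (set b1 \<union> supp (swA Pc) \<Psi>1) = {}"
     "frame_equiv (b1 @ b2, comp Pc \<Psi>1 \<Psi>2) F" using frame_struct_parD[OF PPar(3)] by blast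
  obtain b1' \<Psi>1' b2' \<Psi>2' where 2: "frame_struct Pc P (b1', \<Psi>1')" "frame_struct Pc Q (b2', \<Psi>2')"
     "set b1' \<inter> (set b2' \<union> supp (swA Pc) \<Psi>2') = {}" "set b2' \<inter> (set b1' \<union> supp (swA Pc) \<Psi>1') = {}"
     "frame_equiv (b1' @ b2', comp Pc \<Psi>1' \<Psi>2') G" using frame_struct_parD[OF PPar(4)] by blast
  have "frame_equiv (b1 @ b2, comp Pc \<Psi>1 \<Psi>2) (b1' @ b2', comp Pc \<Psi>1' \<Psi>2')"
    by (rule frame_equiv_par[OF PPar(1)[OF 1(1) 2(1)] PPar(2)[OF 1(2) 2(2)] 1(3,4) 2(3,4)])
  then show ?case using 1 2 by (blast intro: frame_equiv_trans frame_equiv_sym)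
qed (meson frame_struct_unitD unit_framed_simps frame_equiv_trans frame_equiv_sym)+

lemma frame_struct_par_fresh:
  assumes "frame_struct Pc P F1" "frame_struct Pc Q F2" "finite D"
  shows "\<exists>b1 \<Psi>1 b2 \<Psi>2. frame_struct Pc P (b1, \<Psi>1) \<and> frame_struct Pc Q (b2, \<Psi>2) \<and>
     frame_equiv F1 (b1, \<Psi>1) \<and> frame_equiv F2 (b2, \<Psi>2) \<and>
     set b1 \<inter> (set b2 \<union> supp (swA Pc) \<Psi>2) = {} \<and> set b2 \<inter> (set b1 \<union> supp (swA Pc) \<Psi>1) = {} \<and>
     set b1 \<inter> D = {} \<and> set b2 \<inter> D = {}"
proof -
  have fresh: "\<exists>b \<Psi>. frame_struct Pc X (b, \<Psi>) \<and> frame_equiv F (b, \<Psi>) \<and> set b \<inter> E = {}"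
    if "frame_struct Pc X F" "finite E" for X F E
    using frame_alpha_fresh[OF \<open>finite E\<close>, of F] that
    by (metis frame_struct.fs_alpha frame_alpha_equiv prod.collapse)
  obtain b1 \<Psi>1 where 1: "frame_struct Pc P (b1, \<Psi>1)" "frame_equiv F1 (b1, \<Psi>1)"
    "set b1 \<inter> (D \<union> fn Pc Q) = {}"
    using fresh[OF assms(1), of "D \<union> fn Pc Q"] assms(3) by auto
  obtain b2 \<Psi>2 where 2: "frame_struct Pc Q (b2, \<Psi>2)" "frame_equiv F2 (b2, \<Psi>2)"
    "set b2 \<inter> (D \<union> set b1 \<union> supp (swA Pc) \<Psi>1) = {}"
    using fresh[OF assms(2), of "D \<union> set b1 \<union> supp (swA Pc) \<Psi>1"] assms(3) by auto
  have "supp (swA Pc) \<Psi>2 \<subseteq> fn Pc Q \<union> set b2"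
    using frame_of_supp'[OF frame_struct_frame_of[OF 2(1)]] .
  then show ?thesis using 1 2 by blast
qed

lemma frame_struct_exists: "\<exists>F. frame_struct Pc P F"
proof (induct P)
  case (PRes x P)
  then show ?case by (metis frame_struct.fs_res prod.collapse)
next
  case (PPar P Q)
  then show ?case using frame_struct_par_fresh[of P _ Q _ "{}"] by (blast intro: frame_struct.fs_par)
qed (blast intro: frame_struct.intros)+

lemma frame_struct_res_equiv:
  assumes "frame_struct Pc P F" "frame_equiv F (bs, \<Psi>)"
  shows "\<exists>F'. frame_struct Pc (PRes x P) F' \<and> frame_equiv F' (x # bs, \<Psi>)"
  using assms by (metis frame_struct.fs_res frame_equiv_res prod.collapse)

lemma frame_struct_par_equiv:
  assumes "frame_struct Pc P F1" "frame_equiv F1 (b1, \<Psi>1)"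
    and "frame_struct Pc Q F2" "frame_equiv F2 (b2, \<Psi>2)"
    and "set b1 \<inter> (set b2 \<union> supp (swA Pc) \<Psi>2) = {}" "set b2 \<inter> (set b1 \<union> supp (swA Pc) \<Psi>1) = {}"
  shows "\<exists>F'. frame_struct Pc (PPar P Q) F' \<and> frame_equiv F' (b1 @ b2, comp Pc \<Psi>1 \<Psi>2)"
proof -
  obtain c1 \<Phi>1 c2 \<Phi>2 where c: "frame_struct Pc P (c1, \<Phi>1)" "frame_struct Pc Q (c2, \<Phi>2)"
    "frame_equiv F1 (c1, \<Phi>1)" "frame_equiv F2 (c2, \<Phi>2)"
    "set c1 \<inter> (set c2 \<union> supp (swA Pc) \<Phi>2) = {}" "set c2 \<inter> (set c1 \<union> supp (swA Pc) \<Phi>1) = {}"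
    using frame_struct_par_fresh[OF assms(1,3), of "{}"] by auto
  have "frame_equiv (c1, \<Phi>1) (b1, \<Psi>1)" "frame_equiv (c2, \<Phi>2) (b2, \<Psi>2)"
    using assms c by (blast intro: frame_equiv_trans frame_equiv_sym)+
  then have "frame_equiv (c1 @ c2, comp Pc \<Phi>1 \<Phi>2) (b1 @ b2, comp Pc \<Psi>1 \<Psi>2)"
    using frame_equiv_par assms(5,6) c(5,6) by blast
  moreover have "frame_struct Pc (PPar P Q) (c1 @ c2, comp Pc \<Phi>1 \<Phi>2)"
    using c by (blast intro: frame_struct.fs_par)
  ultimately show ?thesis by blast
qed

lemma frame_struct_alpha: "alpha Pc P Q \<Longrightarrow>
   (\<forall>F. frame_struct Pc Q F \<longrightarrow> (\<exists>F'. frame_struct Pc P F' \<and> frame_equiv F' F)) \<and>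
   (\<forall>F. frame_struct Pc P F \<longrightarrow> (\<exists>F'. frame_struct Pc Q F' \<and> frame_equiv F' F))"
proof (induct rule: alpha.induct)
  case (a_trans P Q R)
  then show ?case by (meson frame_equiv_trans)
next
  case (a_swap a P b)
  have fs: "fn Pc (swap_agent Pc a b P) = fn Pc P" using a_swap by (simp add: fn_swap nswap_image_fix)
  have swap_equiv: "frame_equiv (swap_frame Pc a b F) F" if "frame_struct Pc X F" "fn Pc X = fn Pc P" for X F
    using frame_of_supp[OF frame_struct_frame_of[OF that(1)]] that(2) a_swap
    by (blast intro: frame_equiv_sym frame_alpha_equiv frame_alpha.fa_swap)
  show ?case using frame_struct_eqvt[of _ _ a b] swap_equiv fs
    by (metis swap_agent_invol)
next
  case (a_res P Q x)
  then show ?case by (meson frame_struct_resD frame_struct_res_equiv frame_equiv_trans)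
next
  case (a_par P P' Q Q')
  have "\<exists>F'. frame_struct Pc (PPar A B) F' \<and> frame_equiv F' F"
    if ab: "\<forall>F. frame_struct Pc A' F \<longrightarrow> (\<exists>F'. frame_struct Pc A F' \<and> frame_equiv F' F)"
       "\<forall>F. frame_struct Pc B' F \<longrightarrow> (\<exists>F'. frame_struct Pc B F' \<and> frame_equiv F' F)"
       and F: "frame_struct Pc (PPar A' B') F" for A B A' B' F
  proof -
    obtain b1 \<Psi>1 b2 \<Psi>2 where 1: "frame_struct Pc A' (b1, \<Psi>1)" "frame_struct Pc B' (b2, \<Psi>2)"
     "set b1 \<inter> (set b2 \<union> supp (swA Pc) \<Psi>2) = {}" "set b2 \<inter> (set b1 \<union> supp (swA Pc) \<Psi>1) = {}"
     "frame_equiv (b1 @ b2, comp Pc \<Psi>1 \<Psi>2) F" using frame_struct_parD[OF F] by blast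
    then show ?thesis using ab frame_struct_par_equiv by (meson frame_equiv_trans)
  qed
  then show ?case using a_par by blast
qed (meson frame_equiv_refl frame_struct.intros frame_struct_unitD unit_framed_simps)+

lemma frame_of_struct: "frame_of Pc P F \<Longrightarrow> \<exists>F'. frame_struct Pc P F' \<and> frame_equiv F' F"
proof (induct rule: frame_of.induct)
  case (f_res P bs \<Psi> x)
  then show ?case by (blast intro: frame_struct_res_equiv)
next
  case (f_par P b1 \<Psi>1 Q b2 \<Psi>2)
  then show ?case by (blast intro: frame_struct_par_equiv)
next
  case (f_alpha P F G)
  then show ?case by (blast intro: frame_equiv_trans frame_alpha_equiv)
next
  case (f_alpha_agent P Q F)
  then show ?case using frame_struct_alpha by (blast intro: frame_equiv_trans)
qed (meson frame_struct.intros frame_equiv_refl)+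

theorem frame_of_unique: "frame_of Pc P F \<Longrightarrow> frame_of Pc P G \<Longrightarrow> frame_equiv F G"
  by (meson frame_of_struct frame_struct_unique frame_equiv_trans frame_equiv_sym)

lemma frame_exists: "finite D \<Longrightarrow> \<exists>bs \<Psi>. frame_of Pc P (bs, \<Psi>) \<and> set bs \<inter> D = {}"
  using frame_struct_exists[of P] frame_alpha_fresh[of D]
  by (metis frame_of.f_alpha frame_struct_frame_of prod.collapse)

end

section \<open>Free names of input derivatives\<close>

context psi_calc begin

text \<open>First a coarse bound by equivariance; then the names xs are removed using the renaming
  property (S2) of substitution.\<close>

lemma subst_supp_coarse: assumes "nomset sw" "subst_ok Pc sw sb"
  shows "supp sw (sb X xs Ts) \<subseteq> supp sw X \<union> set xs \<union> suppTs Pc Ts"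
proof (rule nomset.supp_le[OF assms(1)])
  show "finite (supp sw X \<union> set xs \<union> suppTs Pc Ts)"
    using nomset.fin_supp[OF assms(1)] by (simp add: suppTs_def)
next
  fix c d assume c: "c \<notin> supp sw X \<union> set xs \<union> suppTs Pc Ts" and d: "d \<notin> supp sw X \<union> set xs \<union> suppTs Pc Ts"
  have "sw c d (sb X xs Ts) = sb (sw c d X) (map (nswap c d) xs) (map (swT Pc c d) Ts)"
    using assms(2) by (simp add: subst_ok_def)
  moreover have "sw c d X = X" using c d nomset.fresh_swap[OF assms(1)] by auto
  moreover have "map (nswap c d) xs = xs" using c d by (simp add: map_nswap_fix)
  moreover have "map (swT Pc c d) Ts = Ts"
    using c d by (intro map_idI) (auto simp: suppTs_def T.fresh_swap)
  ultimately show "sw c d (sb X xs Ts) = sb X xs Ts" by simp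
qed

lemma subst_supp: assumes "nomset sw" "subst_ok Pc sw sb" "distinct xs" "length xs = length Ts"
  shows "supp sw (sb X xs Ts) \<subseteq> (supp sw X - set xs) \<union> suppTs Pc Ts"
proof
  fix y assume y: "y \<in> supp sw (sb X xs Ts)"
  show "y \<in> (supp sw X - set xs) \<union> suppTs Pc Ts"
  proof (rule ccontr)
    assume ny: "y \<notin> (supp sw X - set xs) \<union> suppTs Pc Ts"
    have yx: "y \<in> set xs" using ny y subst_supp_coarse[OF assms(1,2)] by auto
    have fin: "finite (supp sw X \<union> set xs \<union> suppTs Pc Ts \<union> {y})"
      using nomset.fin_supp[OF assms(1)] by (simp add: suppTs_def)
    obtain bs where bs: "length bs = length xs" "distinct bs"
      "set bs \<inter> (supp sw X \<union> set xs \<union> suppTs Pc Ts \<union> {y}) = {}"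
      using fresh_list[OF fin, of "length xs"] by auto
    then have "set bs \<inter> (supp sw X \<union> set xs) = {}" by auto
    then have eq: "sb X xs Ts = sb (swap_seq sw bs xs X) bs Ts"
      using assms(2,3,4) bs(1,2) unfolding subst_ok_def by metis
    have "y \<notin> supp sw (swap_seq sw bs xs X)"
      using bs yx assms(3) by (intro nomset.swap_seq_out[OF assms(1)]) auto
    then have "y \<notin> supp sw (sb X xs Ts)"
      using subst_supp_coarse[OF assms(1,2), of "swap_seq sw bs xs X" bs Ts] eq bs ny by auto
    then show False using y by simp
  qed
qed

lemma agent_subst_fn: "agent_subst Pc xs Ts P P' \<Longrightarrow> distinct xs \<Longrightarrow> length xs = length Ts \<Longrightarrow>
   fn Pc P' \<subseteq> (fn Pc P - set xs) \<union> suppTs Pc Ts"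
proof (induct rule: agent_subst.induct)
  case (s_out P P' M N)
  then show ?case using subst_supp[OF T.nomset_axioms substT_ok, of xs Ts M]
      subst_supp[OF T.nomset_axioms substT_ok, of xs Ts N] by auto
next
  case (s_in ys P P' M N)
  then show ?case using subst_supp[OF T.nomset_axioms substT_ok, of xs Ts M]
      subst_supp[OF T.nomset_axioms substT_ok, of xs Ts N] by auto
next
  case (s_case cs ds)
  show ?case
  proof
    fix y assume "y \<in> fn Pc (PCase ds)"
    then obtain i where i: "i < length ds" "y \<in> supp (swC Pc) (fst (ds!i)) \<union> fn Pc (snd (ds!i))"
      unfolding fn_PCase_nth by auto
    have ic: "i < length cs" using i s_case by simp
    have "supp (swC Pc) (fst (ds!i)) \<subseteq> (supp (swC Pc) (fst (cs!i)) - set xs) \<union> suppTs Pc Ts"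
      using s_case(2) ic subst_supp[OF C.nomset_axioms substC_ok s_case(3,4)] by auto
    moreover have "fn Pc (snd (ds!i)) \<subseteq> (fn Pc (snd (cs!i)) - set xs) \<union> suppTs Pc Ts"
      using s_case ic by auto
    ultimately show "y \<in> (fn Pc (PCase cs) - set xs) \<union> suppTs Pc Ts"
      using i ic unfolding fn_PCase_nth by blast
  qed
next
  case (s_assert \<Psi>)
  then show ?case using subst_supp[OF A.nomset_axioms substA_ok, of xs Ts \<Psi>] by auto
next
  case (s_alpha P Q Q')
  then show ?case using alpha_fn by auto
qed auto

text \<open>The names received in an input are visible in the object: by (S1), since the pattern
  variables of a well-formed input all occur in the pattern.\<close>

lemma input_object_supp:
  assumes "distinct ys" "set ys \<subseteq> supp (swT Pc) N" "length Ls = length ys"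
  shows "suppTs Pc Ls \<subseteq> supp (swT Pc) (substT Pc N ys Ls)"
proof
  fix b assume "b \<in> suppTs Pc Ls"
  then show "b \<in> supp (swT Pc) (substT Pc N ys Ls)"
    using substT_ok assms unfolding subst_ok_def by (metis (no_types, lifting))
qed

lemma input_derivative_fn:
  "psi_trans Pc \<Psi> R \<alpha> R' \<Longrightarrow> \<alpha> = AIn M N \<Longrightarrow> wf_agent Pc R \<Longrightarrow> fn Pc R' \<subseteq> fn Pc R \<union> supp (swT Pc) N"
proof (induct rule: psi_trans.induct)
  case (t_in \<Psi>' M' K Ls ys P P' N')
  then have "fn Pc P' \<subseteq> (fn Pc P - set ys) \<union> suppTs Pc Ls"
    by (intro agent_subst_fn) auto
  moreover have "suppTs Pc Ls \<subseteq> supp (swT Pc) (substT Pc N' ys Ls)"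
    using t_in by (intro input_object_supp) auto
  ultimately show ?case using t_in by auto
next
  case (t_case i cs \<Psi> \<alpha> P')
  then have mem: "cs ! i \<in> set cs" by simp
  then have "fn Pc (snd (cs!i)) \<subseteq> fn Pc (PCase cs)" unfolding fn_PCase by blast
  moreover have "wf_agent Pc (snd (cs!i))" using t_case mem by (auto simp: map_prod_def case_prod_beta)
  ultimately show ?case using t_case by blast
next
  case (t_alpha \<Psi> P \<alpha> P' Q \<beta> Q')
  then have "\<alpha> = AIn M N \<and> alpha Pc P' Q'" using resid_alpha_inputD by blast
  moreover have "wf_agent Pc P" using alpha_wf[OF t_alpha(3)] t_alpha by simp
  ultimately have "fn Pc P' \<subseteq> fn Pc P \<union> supp (swT Pc) N" using t_alpha by blast
  moreover have "fn Pc P' = fn Pc Q'" "fn Pc P = fn Pc Q"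
    using alpha_fn \<open>\<alpha> = AIn M N \<and> alpha Pc P' Q'\<close> t_alpha(3) by blast+
  ultimately show ?case by simp
next
  case (t_par Q bQ \<Psi>Q \<Psi> P \<alpha> P')
  then have "fn Pc P' \<subseteq> fn Pc P \<union> supp (swT Pc) N" by simp
  then show ?case by auto
next
  case (t_par2 P bP \<Psi>P \<Psi> Q \<alpha> Q')
  then have "fn Pc Q' \<subseteq> fn Pc Q \<union> supp (swT Pc) N" by simp
  then show ?case by auto
next
  case (t_scope \<Psi> P \<alpha> P' b)
  then have "fn Pc P' \<subseteq> fn Pc P \<union> supp (swT Pc) N" by simp
  then show ?case by auto
qed simp_all

end

section \<open>Extension of frames along input transitions\<close>

context psi_calc begin

definition extends_to :: "'a frame \<Rightarrow> ('t, 'c, 'a) agent \<Rightarrow> bool" where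
  "extends_to F R' \<longleftrightarrow> (\<forall>C. finite C \<longrightarrow> set (fst F) \<inter> C = {} \<longrightarrow>
     (\<exists>\<Psi>' bh \<Psi>h. frame_of Pc R' (bh, \<Psi>h) \<and> aeq Pc (comp Pc (snd F) \<Psi>') \<Psi>h \<and>
        set bh \<inter> (C \<union> fn Pc R') = {}))"

lemma extends_toD:
  "extends_to (bs, \<Psi>) R' \<Longrightarrow> finite C \<Longrightarrow> set bs \<inter> C = {} \<Longrightarrow>
   \<exists>\<Psi>' bh \<Psi>h. frame_of Pc R' (bh, \<Psi>h) \<and> aeq Pc (comp Pc \<Psi> \<Psi>') \<Psi>h \<and> set bh \<inter> (C \<union> fn Pc R') = {}"
  unfolding extends_to_def by auto

lemma extends_to_unit: "extends_to ([], unitA Pc) R'"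
  unfolding extends_to_def
proof (intro allI impI)
  fix C :: "name set" assume "finite C"
  then obtain bs \<Psi> where "frame_of Pc R' (bs, \<Psi>)" "set bs \<inter> (C \<union> fn Pc R') = {}"
    using frame_exists[of "C \<union> fn Pc R'" R'] by auto
  then show "\<exists>\<Psi>' bh \<Psi>h. frame_of Pc R' (bh, \<Psi>h) \<and> aeq Pc (comp Pc (snd ([], unitA Pc)) \<Psi>') \<Psi>h \<and>
      set bh \<inter> (C \<union> fn Pc R') = {}"
    using aeq_unitl[of \<Psi>] by auto
qed

lemma extends_to_alpha: assumes "alpha Pc P' Q'" "extends_to F P'" shows "extends_to F Q'"
proof -
  have "fn Pc P' = fn Pc Q'" by (rule alpha_fn[OF assms(1)])
  moreover have "frame_of Pc P' H \<Longrightarrow> frame_of Pc Q' H" for H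
    using assms(1) by (blast intro: frame_of.f_alpha_agent alpha.a_sym)
  ultimately show ?thesis using assms(2) unfolding extends_to_def by metis
qed

lemma extends_to_swap:
  assumes "extends_to (bs, \<Psi>) R'" "a \<notin> fn Pc R'" "c \<notin> fn Pc R'"
  shows "extends_to (map (nswap a c) bs, swA Pc a c \<Psi>) R'"
  unfolding extends_to_def
proof (intro allI impI)
  fix C :: "name set" assume C: "finite C" "set (fst (map (nswap a c) bs, swA Pc a c \<Psi>)) \<inter> C = {}"
  have "finite (nswap a c ` C)" "set bs \<inter> nswap a c ` C = {}"
    using C by (auto simp: nswap_in_image)
  then obtain \<Psi>' bh \<Psi>h where H: "frame_of Pc R' (bh, \<Psi>h)" "aeq Pc (comp Pc \<Psi> \<Psi>') \<Psi>h"
    "set bh \<inter> (nswap a c ` C \<union> fn Pc R') = {}" using extends_toD[OF assms(1)] by meson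
  have "fn_frame Pc (bh, \<Psi>h) \<subseteq> fn Pc R'" by (rule frame_of_supp[OF H(1)])
  then have "frame_of Pc R' (swap_frame Pc a c (bh, \<Psi>h))"
    using H(1) assms(2,3) by (blast intro: frame_of.f_alpha frame_alpha.fa_swap)
  moreover have "aeq Pc (comp Pc (swA Pc a c \<Psi>) (swA Pc a c \<Psi>')) (swA Pc a c \<Psi>h)"
    using aeq_swap[OF H(2), of a c] by (simp add: comp_eqvt)
  moreover have "set (map (nswap a c) bh) \<inter> (C \<union> fn Pc R') = {}"
    using H(3) nswap_image_fix[OF assms(2,3)] by (auto simp: nswap_in_image)
  ultimately show "\<exists>\<Psi>' bh \<Psi>h. frame_of Pc R' (bh, \<Psi>h) \<and>
      aeq Pc (comp Pc (snd (map (nswap a c) bs, swA Pc a c \<Psi>)) \<Psi>') \<Psi>h \<and> set bh \<inter> (C \<union> fn Pc R') = {}"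
    unfolding swap_frame_def snd_conv fst_conv by blast
qed

lemma extends_to_res:
  assumes "extends_to (bs, \<Psi>) P'" "x \<notin> set bs"
  shows "extends_to (x # bs, \<Psi>) (PRes x P')"
  unfolding extends_to_def
proof (intro allI impI)
  fix C :: "name set" assume C: "finite C" "set (fst (x # bs, \<Psi>)) \<inter> C = {}"
  then have "finite (C \<union> {x})" "set bs \<inter> (C \<union> {x}) = {}" using assms(2) by auto
  then obtain \<Psi>' bh \<Psi>h where H: "frame_of Pc P' (bh, \<Psi>h)" "aeq Pc (comp Pc \<Psi> \<Psi>') \<Psi>h"
    "set bh \<inter> (C \<union> {x} \<union> fn Pc P') = {}"
    using extends_toD[OF assms(1)] by meson
  then show "\<exists>\<Psi>' bh \<Psi>h. frame_of Pc (PRes x P') (bh, \<Psi>h) \<and>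
      aeq Pc (comp Pc (snd (x # bs, \<Psi>)) \<Psi>') \<Psi>h \<and> set bh \<inter> (C \<union> fn Pc (PRes x P')) = {}"
    using C(2) by (intro exI[of _ \<Psi>'] exI[of _ "x # bh"] exI[of _ \<Psi>h]) (auto intro: frame_of.f_res)
qed

lemma extends_to_par_left:
  assumes "extends_to (bp, \<Psi>p) P'" "frame_of Pc Q (bq, \<Psi>q)"
    and "set bp \<inter> (set bq \<union> fn Pc Q) = {}" "set bq \<inter> (fn Pc P' \<union> fn Pc Q) = {}"
  shows "extends_to (bp @ bq, comp Pc \<Psi>p \<Psi>q) (PPar P' Q)"
  unfolding extends_to_def
proof (intro allI impI)
  fix C :: "name set" assume C: "finite C" "set (fst (bp @ bq, comp Pc \<Psi>p \<Psi>q)) \<inter> C = {}"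
  then have "finite (C \<union> set bq \<union> fn Pc Q)" "set bp \<inter> (C \<union> set bq \<union> fn Pc Q) = {}"
    using assms(3) by auto
  then obtain \<Psi>' bh \<Psi>h where H: "frame_of Pc P' (bh, \<Psi>h)" "aeq Pc (comp Pc \<Psi>p \<Psi>') \<Psi>h"
    "set bh \<inter> (C \<union> set bq \<union> fn Pc Q \<union> fn Pc P') = {}"
    using extends_toD[OF assms(1)] by meson
  have "frame_of Pc (PPar P' Q) (bh @ bq, comp Pc \<Psi>h \<Psi>q)"
    using H(3) assms(4) by (intro frame_of_par[OF H(1) assms(2)]) auto
  moreover have "aeq Pc (comp Pc (comp Pc \<Psi>p \<Psi>q) \<Psi>') (comp Pc \<Psi>h \<Psi>q)"
    by (rule aeq_extend_left[OF H(2)])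
  ultimately show "\<exists>\<Psi>' bh \<Psi>h. frame_of Pc (PPar P' Q) (bh, \<Psi>h) \<and>
      aeq Pc (comp Pc (snd (bp @ bq, comp Pc \<Psi>p \<Psi>q)) \<Psi>') \<Psi>h \<and> set bh \<inter> (C \<union> fn Pc (PPar P' Q)) = {}"
    using H(3) assms(4) C(2) by (intro exI[of _ \<Psi>'] exI[of _ "bh @ bq"] exI[of _ "comp Pc \<Psi>h \<Psi>q"]) auto
qed

lemma extends_to_par_right:
  assumes "extends_to (bq, \<Psi>q) Q'" "frame_of Pc P (bp, \<Psi>p)"
    and "set bq \<inter> (set bp \<union> fn Pc P) = {}" "set bp \<inter> (fn Pc P \<union> fn Pc Q') = {}"
  shows "extends_to (bp @ bq, comp Pc \<Psi>p \<Psi>q) (PPar P Q')"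
  unfolding extends_to_def
proof (intro allI impI)
  fix C :: "name set" assume C: "finite C" "set (fst (bp @ bq, comp Pc \<Psi>p \<Psi>q)) \<inter> C = {}"
  then have "finite (C \<union> set bp \<union> fn Pc P)" "set bq \<inter> (C \<union> set bp \<union> fn Pc P) = {}"
    using assms(3) by auto
  then obtain \<Psi>' bh \<Psi>h where H: "frame_of Pc Q' (bh, \<Psi>h)" "aeq Pc (comp Pc \<Psi>q \<Psi>') \<Psi>h"
    "set bh \<inter> (C \<union> set bp \<union> fn Pc P \<union> fn Pc Q') = {}"
    using extends_toD[OF assms(1)] by meson
  have "frame_of Pc (PPar P Q') (bp @ bh, comp Pc \<Psi>p \<Psi>h)"
    using H(3) assms(4) by (intro frame_of_par[OF assms(2) H(1)]) auto
  moreover have "aeq Pc (comp Pc (comp Pc \<Psi>p \<Psi>q) \<Psi>') (comp Pc \<Psi>p \<Psi>h)"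
    by (rule aeq_extend_right[OF H(2)])
  ultimately show "\<exists>\<Psi>' bh \<Psi>h. frame_of Pc (PPar P Q') (bh, \<Psi>h) \<and>
      aeq Pc (comp Pc (snd (bp @ bq, comp Pc \<Psi>p \<Psi>q)) \<Psi>') \<Psi>h \<and> set bh \<inter> (C \<union> fn Pc (PPar P Q')) = {}"
    using H(3) assms(4) C(2) by (intro exI[of _ \<Psi>'] exI[of _ "bp @ bh"] exI[of _ "comp Pc \<Psi>p \<Psi>h"]) auto
qed

definition extensible :: "('t, 'c, 'a) agent \<Rightarrow> ('t, 'c, 'a) agent \<Rightarrow> bool" where
  "extensible R R' \<longleftrightarrow> (\<forall>D. finite D \<longrightarrow> (\<exists>F. frame_of Pc R F \<and> set (fst F) \<inter> D = {} \<and> extends_to F R'))"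

lemma extensibleD:
  assumes "extensible R R'" "finite D"
  obtains bs \<Psi> where "frame_of Pc R (bs, \<Psi>)" "set bs \<inter> D = {}" "extends_to (bs, \<Psi>) R'"
  using assms unfolding extensible_def by (metis fst_conv prod.collapse)

lemma extensible_unit: "frame_of Pc R ([], unitA Pc) \<Longrightarrow> extensible R R'"
  unfolding extensible_def using extends_to_unit by fastforce

lemma extensible_alpha:
  assumes "extensible P P'" "alpha Pc P Q" "alpha Pc P' Q'"
  shows "extensible Q Q'"
  unfolding extensible_def
proof (intro allI impI)
  fix D :: "name set" assume "finite D"
  then obtain bs \<Psi> where F: "frame_of Pc P (bs, \<Psi>)" "set bs \<inter> D = {}" "extends_to (bs, \<Psi>) P'"
    by (rule extensibleD[OF assms(1)])
  have "frame_of Pc Q (bs, \<Psi>)" using F(1) assms(2) by (blast intro: frame_of.f_alpha_agent alpha.a_sym)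
  moreover have "extends_to (bs, \<Psi>) Q'" using extends_to_alpha[OF assms(3) F(3)] .
  ultimately show "\<exists>F. frame_of Pc Q F \<and> set (fst F) \<inter> D = {} \<and> extends_to F Q'" using F(2) by auto
qed

text \<open>For a restriction the binder b is added to the frame and then renamed away from D.\<close>

lemma extensible_scope:
  assumes "extensible P P'"
  shows "extensible (PRes b P) (PRes b P')"
  unfolding extensible_def
proof (intro allI impI)
  fix D :: "name set" assume D: "finite D"
  then obtain bp \<Psi>p where p: "frame_of Pc P (bp, \<Psi>p)" "set bp \<inter> (D \<union> {b}) = {}" "extends_to (bp, \<Psi>p) P'"
    using assms by (metis extensibleD finite_insert finite_Un finite.emptyI)
  have "finite (D \<union> {b} \<union> set bp \<union> supp (swA Pc) \<Psi>p \<union> fn Pc P')" using D by simp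
  then obtain c where c: "c \<notin> D \<union> {b} \<union> set bp \<union> supp (swA Pc) \<Psi>p \<union> fn Pc P'"
    using fresh_name by meson
  define F where "F = (map (nswap b c) (b # bp), swA Pc b c \<Psi>p)"
  have "frame_of Pc (PRes b P) (swap_frame Pc b c (b # bp, \<Psi>p))"
    using c by (intro frame_of.f_alpha[OF frame_of.f_res[OF p(1)]] frame_alpha.fa_swap)
      (auto simp: fn_frame_def)
  then have "frame_of Pc (PRes b P) F" by (simp add: F_def swap_frame_def)
  moreover have "map (nswap b c) bp = bp" using p(2) c by (intro map_nswap_fix) auto
  then have "set (fst F) \<inter> D = {}" using p(2) c by (auto simp: F_def)
  moreover have "extends_to F (PRes b P')"
    unfolding F_def using c p(2) by (intro extends_to_swap extends_to_res p(3)) auto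
  ultimately show "\<exists>F. frame_of Pc (PRes b P) F \<and> set (fst F) \<inter> D = {} \<and> extends_to F (PRes b P')"
    by blast
qed

text \<open>For a parallel composition the frame of the idle component is chosen first, with binders
  fresh for everything in sight; the frame of the moving component then avoids it.\<close>

lemma extensible_par_left:
  assumes "extensible P P'"
  shows "extensible (PPar P Q) (PPar P' Q)"
  unfolding extensible_def
proof (intro allI impI)
  fix D :: "name set" assume D: "finite D"
  then obtain bq \<Psi>q where q: "frame_of Pc Q (bq, \<Psi>q)" "set bq \<inter> (D \<union> fn Pc P \<union> fn Pc P' \<union> fn Pc Q) = {}"
    using frame_exists[of "D \<union> fn Pc P \<union> fn Pc P' \<union> fn Pc Q" Q] by auto
  obtain bp \<Psi>p where p: "frame_of Pc P (bp, \<Psi>p)" "set bp \<inter> (D \<union> set bq \<union> fn Pc Q) = {}"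
    "extends_to (bp, \<Psi>p) P'"
    using extensibleD[OF assms, of "D \<union> set bq \<union> fn Pc Q"] D by auto
  have "frame_of Pc (PPar P Q) (bp @ bq, comp Pc \<Psi>p \<Psi>q)"
    using p q by (intro frame_of_par) auto
  moreover have "extends_to (bp @ bq, comp Pc \<Psi>p \<Psi>q) (PPar P' Q)"
    using p q by (intro extends_to_par_left) auto
  ultimately show "\<exists>F. frame_of Pc (PPar P Q) F \<and> set (fst F) \<inter> D = {} \<and> extends_to F (PPar P' Q)"
    using p q by (intro exI[of _ "(bp @ bq, comp Pc \<Psi>p \<Psi>q)"]) auto
qed

lemma extensible_par_right:
  assumes "extensible Q Q'"
  shows "extensible (PPar P Q) (PPar P Q')"
  unfolding extensible_def
proof (intro allI impI)
  fix D :: "name set" assume D: "finite D"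
  then obtain bp \<Psi>p where p: "frame_of Pc P (bp, \<Psi>p)" "set bp \<inter> (D \<union> fn Pc Q \<union> fn Pc Q' \<union> fn Pc P) = {}"
    using frame_exists[of "D \<union> fn Pc Q \<union> fn Pc Q' \<union> fn Pc P" P] by auto
  obtain bq \<Psi>q where q: "frame_of Pc Q (bq, \<Psi>q)" "set bq \<inter> (D \<union> set bp \<union> fn Pc P) = {}"
    "extends_to (bq, \<Psi>q) Q'"
    using extensibleD[OF assms, of "D \<union> set bp \<union> fn Pc P"] D by auto
  have "frame_of Pc (PPar P Q) (bp @ bq, comp Pc \<Psi>p \<Psi>q)"
    using p q by (intro frame_of_par) auto
  moreover have "extends_to (bp @ bq, comp Pc \<Psi>p \<Psi>q) (PPar P Q')"
    using p q by (intro extends_to_par_right) auto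
  ultimately show "\<exists>F. frame_of Pc (PPar P Q) F \<and> set (fst F) \<inter> D = {} \<and> extends_to F (PPar P Q')"
    using p q by (intro exI[of _ "(bp @ bq, comp Pc \<Psi>p \<Psi>q)"]) auto
qed

text \<open>The main induction: an agent is extensible to the derivative of any input transition.
  Com and Open yield other actions; In, Case and Rep start from the unit frame.\<close>

lemma input_extensible: "psi_trans Pc \<Psi> R \<alpha> R' \<Longrightarrow> \<alpha> = AIn M N \<Longrightarrow> extensible R R'"
proof (induct rule: psi_trans.induct)
  case (t_alpha \<Psi> P \<alpha> P' Q \<beta> Q')
  have "\<alpha> = AIn M N" "alpha Pc P' Q'"
    using resid_alpha_inputD t_alpha(4) t_alpha.prems by blast+
  then show ?case using t_alpha(2,3) extensible_alpha by blast
next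
  case (t_scope \<Psi> P \<alpha> P' b)
  then show ?case by (blast intro: extensible_scope)
next
  case (t_par Q bQ \<Psi>Q \<Psi> P \<alpha> P')
  then show ?case by (blast intro: extensible_par_left)
next
  case (t_par2 P bP \<Psi>P \<Psi> Q \<alpha> Q')
  then show ?case by (blast intro: extensible_par_right)
qed (auto intro: extensible_unit frame_of.intros)

lemma extends_to_frame_equiv:
  assumes ext: "extends_to (b0, \<Psi>0) R'" and fe: "frame_equiv (b0, \<Psi>0) (bs, \<Psi>)" and C: "finite C"
    and fresh: "set b0 \<inter> (C \<union> fn Pc R') = {}" "set bs \<inter> (C \<union> fn Pc R') = {}"
  shows "\<exists>\<Psi>' bh \<Psi>h. frame_of Pc R' (bh, \<Psi>h) \<and> aeq Pc (comp Pc \<Psi> \<Psi>') \<Psi>h \<and> set bh \<inter> (C \<union> fn Pc R') = {}"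
proof -
  obtain q where q: "\<Psi> = perm_assn Pc q \<Psi>0" "perm_names q \<inter> (C \<union> fn Pc R' \<union> fn_frame Pc (b0, \<Psi>0)) = {}"
    using frame_equiv_avoid[OF fe, of "C \<union> fn Pc R'"] C fresh by auto
  obtain \<Psi>' bh \<Psi>h where H: "frame_of Pc R' (bh, \<Psi>h)" "aeq Pc (comp Pc \<Psi>0 \<Psi>') \<Psi>h"
    "set bh \<inter> (C \<union> fn Pc R') = {}"
    using extends_toD[OF ext C] fresh by auto
  define H' where "H' = perm_frame Pc q (bh, \<Psi>h)"
  have "perm_names q \<inter> fn_frame Pc (bh, \<Psi>h) = {}" using frame_of_supp[OF H(1)] q(2) by auto
  then have "frame_of Pc R' H'" using H(1) perm_frame_alpha frame_of.f_alpha H'_def by blast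
  moreover have "aeq Pc (comp Pc \<Psi> (perm_assn Pc q \<Psi>')) (snd H')"
    using aeq_perm_assn[OF H(2), of q] q(1) by (simp add: H'_def perm_assn_comp snd_perm_frame)
  moreover have "set (fst H') \<inter> (C \<union> fn Pc R') = {}"
    using perm_frame_binders_fresh[of "(bh, \<Psi>h)" "C \<union> fn Pc R'" q] H(3) q(2) by (auto simp: H'_def)
  ultimately show ?thesis by (cases H') auto
qed

end

theorem mainTheorem8:
  fixes Pc :: "('t, 'c, 'a) psi"
    and \<Psi> \<Psi>R :: 'a
    and R R' :: "('t, 'c, 'a) agent"
    and M N :: 't
    and bR :: "name list"
    and C :: "name set"
  assumes "psi_calculus Pc"
    and "wf_agent Pc R"
    and "psi_trans Pc \<Psi> R (AIn M N) R'"
    and "frame_of Pc R (bR, \<Psi>R)"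
    and "finite C"
    and "set bR \<inter> fn Pc R = {}"
    and "set bR \<inter> supp (swT Pc) N = {}"
    and "set bR \<inter> C = {}"
  shows "\<exists>\<Psi>' bR' \<Psi>R'. frame_of Pc R' (bR', \<Psi>R') \<and> aeq Pc (comp Pc \<Psi>R \<Psi>') \<Psi>R' \<and>
           set bR' \<inter> C = {} \<and> set bR' \<inter> fn Pc R' = {}"
proof -
  interpret psi_calc Pc by unfold_locales (rule assms(1))
  have "fn Pc R' \<subseteq> fn Pc R \<union> supp (swT Pc) N"
    by (rule input_derivative_fn[OF assms(3) refl assms(2)])
  then have bR_fresh: "set bR \<inter> (C \<union> fn Pc R') = {}" using assms(6-8) by blast
  have "extensible R R'" by (rule input_extensible[OF assms(3) refl])
  then obtain bs \<Psi>0 where F: "frame_of Pc R (bs, \<Psi>0)" "set bs \<inter> (C \<union> fn Pc R') = {}"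
    "extends_to (bs, \<Psi>0) R'"
    using assms(5) by (metis extensibleD finite_Un finite_fn)
  have "frame_equiv (bs, \<Psi>0) (bR, \<Psi>R)" using frame_of_unique[OF F(1) assms(4)] .
  from extends_to_frame_equiv[OF F(3) this assms(5) F(2) bR_fresh] show ?thesis by blast
qed

end
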